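(* Let $[t_0,t_1]$ be an admissible segment of $\mathbf r$ with associated tetrahedron $\mathbf r_0\mathbf r_1\mathbf r_2\mathbf r_3$, and for $t^\star\in(t_0,t_1)$ let $\mathbf r_{01},\mathbf r_{12},\mathbf r_{23}$ be the intersection points of the osculating plane $O(t^\star)$ with the lines $\mathbf r_0\mathbf r_1$, $\mathbf r_1\mathbf r_2$, $\mathbf r_2\mathbf r_3$. Define $k_1(t^\star)=\|\mathbf r_1\mathbf r_{01}\|/\|\mathbf r_1\mathbf r_0\|$, $k_2(t^\star)=\|\mathbf r_2\mathbf r_{12}\|/\|\mathbf r_2\mathbf r_1\|$, $k_3(t^\star)=\|\mathbf r_3\mathbf r_{23}\|/\|\mathbf r_3\mathbf r_2\|$. Then each $k_i$ is monotone on $(t_0,t_1)$ and $k_i(t^\star)\in(0,1)$ for all $t^\star\in(t_0,t_1)$, $i=1,2,3$.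
   Context: Setting: $\mathbf r(t)=(x(t),y(t),z(t))$ with $x,y,z$ rational functions with real coefficients whose denominators do not vanish on the parameter interval, properly parametrized, and not contained in a plane. Curvature $\kappa=\|\mathbf r'\times\mathbf r''\|/\|\mathbf r'\|^3$; torsion $\tau$ vanishes exactly where $\det(\mathbf r',\mathbf r'',\mathbf r''')=0$. Unit tangent $\boldsymbol\alpha=\mathbf r'/\|\mathbf r'\|$, unit binormal $\boldsymbol\gamma=\mathbf r'\times\mathbf r''/\|\mathbf r'\times\mathbf r''\|$; one-sided limits $\boldsymbol\alpha^{\pm}(s)=\lim_{t\to s^\pm}\boldsymbol\alpha(t)$, $\boldsymbol\gamma^{\pm}(s)=\lim_{t\to s^\pm}\boldsymbol\gamma(t)$; tangent lines $T^{\pm}(s)=\{\mathbf r(s)+\lambda\boldsymbol\alpha^{\pm}(s)\}$, osculating planes $O^{\pm}(s)=\{X:(X-\mathbf r(s))\cdot\boldsymbol\gamma^{\pm}(s)=0\}$ (written $O(s)$ at interior ordinary points). A point is singular if it corresponds to more than one parameter counted with multiplicity; character points are singular points, inflections ($\kappa=0$) and torsion-vanishing points ($\tau=0$). Associated tetrahedron of $[a,b]$: vertices $\mathbf r(a)$, $T^+(a)\cap L$, $T^-(b)\cap L$, $\mathbf r(b)$ where $L=O^+(a)\cap O^-(b)$. Admissible segment: $t_0<t_1$, no parameter in $(t_0,t_1]$ gives a character point, and for all $t_0\le s_1<s_2\le t_1$: (I) $\boldsymbol\alpha^+(s_1)\cdot\boldsymbol\gamma^-(s_2)\ne0$ and $\boldsymbol\alpha^-(s_2)\cdot\boldsymbol\gamma^+(s_1)\ne0$;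 (II) $(\boldsymbol\alpha^+(s_1)\times(\mathbf r(s_2)-\mathbf r(s_1)))\cdot\boldsymbol\alpha^-(s_2)\ne0$; (III) $(\mathbf r(s_1)-\mathbf r(s_2))\cdot\boldsymbol\gamma^-(s_2)\ne0$ and $(\mathbf r(s_2)-\mathbf r(s_1))\cdot\boldsymbol\gamma^+(s_1)\ne0$; and (IV) for all $t_0\le s_1<s_2<s_3\le t_1$, $\det(\boldsymbol\alpha(s_1),\boldsymbol\alpha(s_2),\boldsymbol\alpha(s_3))\ne0$ (one-sided limits used at $t_0,t_1$). *)

theory Defs
  imports "HOL-Analysis.Analysis" "HOL-Analysis.Cross3" "HOL-Computational_Algebra.Polynomial"
begin

definition rcurve :: "real poly ^ 3 \<Rightarrow> real poly ^ 3 \<Rightarrow> real \<Rightarrow> real ^ 3" where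
  "rcurve P Q t = (\<chi> i. poly (P $ i) t / poly (Q $ i) t)"

text \<open>Complexified curve (for parameter counting over the complex numbers).\<close>

definition cpoly :: "real poly \<Rightarrow> complex poly" where
  "cpoly p = map_poly complex_of_real p"

definition rcurveC :: "real poly ^ 3 \<Rightarrow> real poly ^ 3 \<Rightarrow> complex \<Rightarrow> complex ^ 3" where
  "rcurveC P Q z = (\<chi> i. poly (cpoly (P $ i)) z / poly (cpoly (Q $ i)) z)"

definition in_domC :: "real poly ^ 3 \<Rightarrow> complex \<Rightarrow> bool" where
  "in_domC Q z \<longleftrightarrow> (\<forall>i. poly (cpoly (Q $ i)) z \<noteq> 0)"

definition proper_param :: "real poly ^ 3 \<Rightarrow> real poly ^ 3 \<Rightarrow> bool" where
  "proper_param P Q \<longleftrightarrow>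
     (\<exists>F :: complex set. finite F \<and>
        (\<forall>t u. t \<notin> F \<and> in_domC Q t \<and> in_domC Q u \<and> rcurveC P Q u = rcurveC P Q t \<longrightarrow> u = t))"

definition rational_space_curve :: "real poly ^ 3 \<Rightarrow> real poly ^ 3 \<Rightarrow> real set \<Rightarrow> bool" where
  "rational_space_curve P Q I \<longleftrightarrow>
     is_interval I \<and>
     (\<forall>i. Q $ i \<noteq> 0 \<and> coprime (P $ i) (Q $ i)) \<and>
     (\<forall>t\<in>I. \<forall>i. poly (Q $ i) t \<noteq> 0) \<and>
     proper_param P Q \<and>
     \<not> (\<exists>n c. n \<noteq> 0 \<and> (\<forall>t\<in>I. n \<bullet> rcurve P Q t = c))"

definition d1 :: "(real \<Rightarrow> real ^ 3) \<Rightarrow> real \<Rightarrow> real ^ 3" where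
  "d1 r t = vector_derivative r (at t)"

definition d2 :: "(real \<Rightarrow> real ^ 3) \<Rightarrow> real \<Rightarrow> real ^ 3" where
  "d2 r t = d1 (d1 r) t"

definition d3 :: "(real \<Rightarrow> real ^ 3) \<Rightarrow> real \<Rightarrow> real ^ 3" where
  "d3 r t = d1 (d2 r) t"

definition curvature :: "(real \<Rightarrow> real ^ 3) \<Rightarrow> real \<Rightarrow> real" where
  "curvature r t = norm (cross3 (d1 r t) (d2 r t)) / norm (d1 r t) ^ 3"

definition torsion :: "(real \<Rightarrow> real ^ 3) \<Rightarrow> real \<Rightarrow> real" where
  "torsion r t = ((cross3 (d1 r t) (d2 r t)) \<bullet> d3 r t) / norm (cross3 (d1 r t) (d2 r t)) ^ 2"

definition unit_tangent :: "(real \<Rightarrow> real ^ 3) \<Rightarrow> real \<Rightarrow> real ^ 3" where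
  "unit_tangent r t = d1 r t /\<^sub>R norm (d1 r t)"

definition unit_binormal :: "(real \<Rightarrow> real ^ 3) \<Rightarrow> real \<Rightarrow> real ^ 3" where
  "unit_binormal r t = (cross3 (d1 r t) (d2 r t)) /\<^sub>R norm (cross3 (d1 r t) (d2 r t))"

definition alpha_plus :: "(real \<Rightarrow> real ^ 3) \<Rightarrow> real \<Rightarrow> real ^ 3" where
  "alpha_plus r s = Lim (at_right s) (unit_tangent r)"

definition alpha_minus :: "(real \<Rightarrow> real ^ 3) \<Rightarrow> real \<Rightarrow> real ^ 3" where
  "alpha_minus r s = Lim (at_left s) (unit_tangent r)"

definition gamma_plus :: "(real \<Rightarrow> real ^ 3) \<Rightarrow> real \<Rightarrow> real ^ 3" where
  "gamma_plus r s = Lim (at_right s) (unit_binormal r)"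

definition gamma_minus :: "(real \<Rightarrow> real ^ 3) \<Rightarrow> real \<Rightarrow> real ^ 3" where
  "gamma_minus r s = Lim (at_left s) (unit_binormal r)"

text \<open>A parameter s gives a singular point if the point r(s) corresponds to more than one
  (complex) parameter counted with multiplicity: either another parameter z \<noteq> s maps to
  r(s), or s itself has multiplicity \<ge> 2 in the fibre, i.e. (t - s)^2 divides every
  P_i - r_i(s) Q_i.\<close>

definition singular_param :: "real poly ^ 3 \<Rightarrow> real poly ^ 3 \<Rightarrow> real \<Rightarrow> bool" where
  "singular_param P Q s \<longleftrightarrow>
     (\<exists>z. z \<noteq> complex_of_real s \<and> in_domC Q z \<and>
          rcurveC P Q z = (\<chi> i. complex_of_real (rcurve P Q s $ i))) \<or>
     (\<forall>i. [:-s, 1:] ^ 2 dvd (P $ i - smult (rcurve P Q s $ i) (Q $ i)))"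

definition character_param :: "real poly ^ 3 \<Rightarrow> real poly ^ 3 \<Rightarrow> real \<Rightarrow> bool" where
  "character_param P Q s \<longleftrightarrow>
     singular_param P Q s \<or> curvature (rcurve P Q) s = 0 \<or> torsion (rcurve P Q) s = 0"

definition seg_alpha :: "(real \<Rightarrow> real ^ 3) \<Rightarrow> real \<Rightarrow> real \<Rightarrow> real \<Rightarrow> real ^ 3" where
  "seg_alpha r t0 t1 s =
     (if s = t0 then alpha_plus r t0 else if s = t1 then alpha_minus r t1 else unit_tangent r s)"

definition admissible_segment ::
  "real poly ^ 3 \<Rightarrow> real poly ^ 3 \<Rightarrow> real set \<Rightarrow> real \<Rightarrow> real \<Rightarrow> bool" where
  "admissible_segment P Q I t0 t1 \<longleftrightarrow>
     (let r = rcurve P Q in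
      t0 < t1 \<and> {t0..t1} \<subseteq> I \<and>
      (\<forall>s\<in>{t0<..t1}. \<not> character_param P Q s) \<and>
      (\<forall>s1 s2. t0 \<le> s1 \<and> s1 < s2 \<and> s2 \<le> t1 \<longrightarrow>
         alpha_plus r s1 \<bullet> gamma_minus r s2 \<noteq> 0 \<and>
         alpha_minus r s2 \<bullet> gamma_plus r s1 \<noteq> 0 \<and>
         (cross3 (alpha_plus r s1) (r s2 - r s1)) \<bullet> alpha_minus r s2 \<noteq> 0 \<and>
         (r s1 - r s2) \<bullet> gamma_minus r s2 \<noteq> 0 \<and>
         (r s2 - r s1) \<bullet> gamma_plus r s1 \<noteq> 0) \<and>
      (\<forall>s1 s2 s3. t0 \<le> s1 \<and> s1 < s2 \<and> s2 < s3 \<and> s3 \<le> t1 \<longrightarrow>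
         (cross3 (seg_alpha r t0 t1 s1) (seg_alpha r t0 t1 s2)) \<bullet> seg_alpha r t0 t1 s3 \<noteq> 0))"

definition tangent_line_plus :: "(real \<Rightarrow> real ^ 3) \<Rightarrow> real \<Rightarrow> (real ^ 3) set" where
  "tangent_line_plus r s = {r s + c *\<^sub>R alpha_plus r s | c. True}"

definition tangent_line_minus :: "(real \<Rightarrow> real ^ 3) \<Rightarrow> real \<Rightarrow> (real ^ 3) set" where
  "tangent_line_minus r s = {r s + c *\<^sub>R alpha_minus r s | c. True}"

definition osc_plane_plus :: "(real \<Rightarrow> real ^ 3) \<Rightarrow> real \<Rightarrow> (real ^ 3) set" where
  "osc_plane_plus r s = {X. (X - r s) \<bullet> gamma_plus r s = 0}"

definition osc_plane_minus :: "(real \<Rightarrow> real ^ 3) \<Rightarrow> real \<Rightarrow> (real ^ 3) set" where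
  "osc_plane_minus r s = {X. (X - r s) \<bullet> gamma_minus r s = 0}"

definition osc_plane :: "(real \<Rightarrow> real ^ 3) \<Rightarrow> real \<Rightarrow> (real ^ 3) set" where
  "osc_plane r s = {X. (X - r s) \<bullet> unit_binormal r s = 0}"

definition line_through :: "real ^ 3 \<Rightarrow> real ^ 3 \<Rightarrow> (real ^ 3) set" where
  "line_through A B = {A + \<mu> *\<^sub>R (B - A) | \<mu>. True}"

definition tet_vertex :: "(real \<Rightarrow> real ^ 3) \<Rightarrow> real \<Rightarrow> real \<Rightarrow> nat \<Rightarrow> real ^ 3" where
  "tet_vertex r a b i =
     (let L = osc_plane_plus r a \<inter> osc_plane_minus r b in
      if i = 0 then r a
      else if i = 1 then (THE X. X \<in> tangent_line_plus r a \<inter> L)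
      else if i = 2 then (THE X. X \<in> tangent_line_minus r b \<inter> L)
      else r b)"

definition tet_ratio :: "(real \<Rightarrow> real ^ 3) \<Rightarrow> real \<Rightarrow> real \<Rightarrow> nat \<Rightarrow> real \<Rightarrow> real" where
  "tet_ratio r a b i t =
     (let A = tet_vertex r a b (i - 1); B = tet_vertex r a b i;
          X = (THE X. X \<in> osc_plane r t \<inter> line_through A B) in
      dist B X / dist B A)"

end

theory Submission
  imports Defs
begin

text \<open>
  Each ratio is \<open>k\<^sub>i(t) = 1 - \<mu>(t)\<close>, where \<open>\<mu>(t) = ((r t - A) \<bullet> b t) / (w \<bullet> b t)\<close> with
  \<open>b = r' \<times> r''\<close> is the parameter at which the edge line \<open>A + \<mu> w\<close> meets the osculating plane
  \<open>O(t)\<close>. Its derivative is \<open>- det(r', r'', r''') det(r - A, w, r') / (w \<bullet> b)\<^sup>2\<close>. The first factor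
  is the torsion numerator; the second is nonzero by condition (II) for the two edges along the end
  tangents, and for the middle edge \<open>O(t\<^sub>0) \<inter> O(t\<^sub>1)\<close> by Binet--Cauchy.

  For the range, the endpoint \<open>t\<^sub>0\<close> may be singular, so the frame is extended there by one-sided
  limits (which exist because the curve is rational). By admissibility the signed heights
  \<open>(r s - r u) \<bullet> \<gamma> u\<close> and tilts \<open>\<alpha> s \<bullet> \<gamma> u\<close> never vanish for \<open>s \<noteq> u\<close>, so their signs are constant
  on the triangle \<open>t\<^sub>0 \<le> s < u \<le> t\<^sub>1\<close>; a Taylor expansion at the diagonal determines how they change
  when \<open>s\<close> and \<open>u\<close> are exchanged, and shows that the tangent at \<open>s\<close> meets \<open>O(u)\<close> close to \<open>r s\<close>
  when \<open>u\<close> is close to \<open>s\<close>. Continuation over the triangle then gives \<open>0 < k\<^sub>1, k\<^sub>3 < 1\<close> and puts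
  \<open>r\<^sub>1\<close> and \<open>r\<^sub>2\<close> on opposite sides of every \<open>O(t)\<close>, whence \<open>0 < k\<^sub>2 < 1\<close>.
\<close>

section \<open>Real analysis\<close>

lemma sign_constant_on_connected:
  fixes f :: "'a::topological_space \<Rightarrow> real"
  assumes "connected S" "continuous_on S f" "\<forall>x\<in>S. f x \<noteq> 0" "x \<in> S" "y \<in> S"
  shows "f x > 0 \<longleftrightarrow> f y > 0"
proof -
  have conn: "connected (f ` S)" using assms(2,1) by (rule connected_continuous_image)
  have no_change: "\<not> (f u < 0 \<and> 0 < f v)" if "u \<in> S" "v \<in> S" for u v
  proof
    assume "f u < 0 \<and> 0 < f v"
    then have "0 \<in> f ` S" using connected_contains_Icc[OF conn, of "f u" "f v"] that by auto
    then show False using assms(3) by auto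
  qed
  show ?thesis
    using no_change[OF assms(4,5)] no_change[OF assms(5,4)] assms(3-5) by force
qed

lemma continuous_on_Times_fst: "continuous_on A f \<Longrightarrow> continuous_on (A \<times> B) (\<lambda>z. f (fst z))"
  by (rule continuous_on_compose2[of A f _ fst]) (auto intro: continuous_intros)

lemma continuous_on_Times_snd: "continuous_on B f \<Longrightarrow> continuous_on (A \<times> B) (\<lambda>z. f (snd z))"
  by (rule continuous_on_compose2[of B f _ snd]) (auto intro: continuous_intros)

lemma convex_Times_Int_less:
  fixes A B :: "real set"
  assumes "convex A" "convex B"
  shows "convex (A \<times> B \<inter> {z. fst z < snd z})"
proof -
  have "{z :: real \<times> real. fst z < snd z} = {z. (1, -1) \<bullet> z < 0}" by (auto simp: inner_Pair)
  then show ?thesis using assms by (auto intro!: convex_Int convex_Times convex_halfspace_lt)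
qed

lemma continuous_on_Icc_extend_at_left:
  fixes f :: "real \<Rightarrow> 'a::topological_space"
  assumes "a < b" "\<And>x. a < x \<Longrightarrow> x \<le> b \<Longrightarrow> isCont f x" "(f \<longlongrightarrow> L) (at_right a)"
  shows "continuous_on {a..b} (\<lambda>x. if x = a then L else f x)"
proof -
  define g where "g x = (if x = a then L else f x)" for x
  have at_inner: "(g \<longlongrightarrow> g x) (at x)" if "a < x" "x \<le> b" for x
  proof -
    have "\<forall>\<^sub>F y in at x. y \<in> {a<..}" by (rule eventually_at_in_open') (use that in auto)
    then have "\<forall>\<^sub>F y in at x. f y = g y" by eventually_elim (auto simp: g_def)
    moreover have "(f \<longlongrightarrow> g x) (at x)" using assms(2)[OF that] that by (simp add: isCont_def g_def)
    ultimately show ?thesis using tendsto_cong by blast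
  qed
  have "\<forall>\<^sub>F y in at_right a. f y = g y" by (simp add: eventually_at_filter g_def)
  then have "(g \<longlongrightarrow> g a) (at_right a)"
    using assms(3) tendsto_cong by (fastforce simp: g_def)
  moreover have "(g \<longlongrightarrow> g b) (at_left b)"
    using at_inner[of b] assms(1) by (simp add: filterlim_at_split)
  ultimately have "continuous_on {a..b} g"
    using at_inner assms(1) by (intro continuous_on_IccI) auto
  then show ?thesis by (simp add: g_def[abs_def])
qed

lemma vec_lambda_has_vector_derivative:
  fixes f :: "real \<Rightarrow> 'n::finite \<Rightarrow> real"
  assumes "\<And>i. ((\<lambda>t. f t i) has_real_derivative f' i) (at x)"
  shows "((\<lambda>t. \<chi> i. f t i) has_vector_derivative (\<chi> i. f' i)) (at x)"
proof -
  have "((\<lambda>t. f t i) has_derivative (\<lambda>h. h * f' i)) (at x)" for i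
    using assms[of i] by (simp add: has_field_derivative_def mult_commute_abs)
  then show ?thesis
    unfolding has_vector_derivative_def
    by (subst has_derivative_componentwise_within) (auto simp: Basis_vec_def inner_axis)
qed

lemma has_real_derivative_inner_const:
  assumes "(f has_vector_derivative f') (at t)"
  shows "((\<lambda>z. f z \<bullet> w) has_real_derivative f' \<bullet> w) (at t)"
proof -
  have "((\<lambda>z. f z \<bullet> w) has_derivative (\<lambda>x. (x *\<^sub>R f') \<bullet> w)) (at t)"
    using assms unfolding has_vector_derivative_def by (rule has_derivative_inner_left)
  then show ?thesis
    unfolding has_field_derivative_def by (rule has_derivative_eq_rhs) (auto simp: fun_eq_iff)
qed

lemma Taylor_vanishing_derivatives:
  fixes f :: "real \<Rightarrow> real"
  assumes "0 < n" "diff 0 = f" "x \<noteq> y"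
    and "\<And>m t. m < n \<Longrightarrow> min x y \<le> t \<Longrightarrow> t \<le> max x y \<Longrightarrow> (diff m has_real_derivative diff (Suc m) t) (at t)"
    and "\<And>m. m < n \<Longrightarrow> diff m y = 0"
  shows "\<exists>\<xi>. min x y < \<xi> \<and> \<xi> < max x y \<and> f x = diff n \<xi> / fact n * (x - y) ^ n"
proof -
  have "\<exists>\<xi>. (if x < y then x < \<xi> \<and> \<xi> < y else y < \<xi> \<and> \<xi> < x) \<and>
      f x = (\<Sum>m<n. diff m y / fact m * (x - y) ^ m) + diff n \<xi> / fact n * (x - y) ^ n"
    by (rule Taylor[of n diff f "min x y" "max x y" y x]) (use assms(1-4) in auto)
  then obtain \<xi> where \<xi>: "if x < y then x < \<xi> \<and> \<xi> < y else y < \<xi> \<and> \<xi> < x"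
    and f: "f x = (\<Sum>m<n. diff m y / fact m * (x - y) ^ m) + diff n \<xi> / fact n * (x - y) ^ n"
    by blast
  have "min x y < \<xi> \<and> \<xi> < max x y" using \<xi> by (auto split: if_splits)
  moreover have "(\<Sum>m<n. diff m y / fact m * (x - y) ^ m) = 0" using assms(5) by simp
  ultimately show ?thesis using f by auto
qed

lemma inj_on_if_deriv_nonzero:
  fixes F :: "real \<Rightarrow> real"
  assumes "is_interval S" "continuous_on S F"
    and "\<And>x. x \<in> interior S \<Longrightarrow> (F has_real_derivative F' x) (at x) \<and> F' x \<noteq> 0"
  shows "inj_on F S"
proof (rule linorder_inj_onI')
  fix a b assume ab: "a \<in> S" "b \<in> S" "a < b"
  have sub: "{a..b} \<subseteq> S" using connected_contains_Icc[OF is_interval_connected[OF assms(1)]] ab by blast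
  have inner: "x \<in> interior S" if "a < x" "x < b" for x
  proof -
    have "{a<..<b} \<subseteq> interior S" using sub by (intro interior_maximal) auto
    then show ?thesis using that by auto
  qed
  show "F a \<noteq> F b"
  proof
    assume "F a = F b"
    moreover have "F differentiable (at x)" if "a < x" "x < b" for x
      using assms(3)[OF inner[OF that]] real_differentiable_def by blast
    ultimately obtain z where z: "a < z" "z < b" "(F has_real_derivative 0) (at z)"
      using Rolle[OF ab(3) _ continuous_on_subset[OF assms(2) sub]] by blast
    then show False
      using assms(3)[OF inner[OF z(1,2)]] DERIV_unique[OF _ z(3)] by auto
  qed
qed

lemma mono_or_antimono_one_minus:
  fixes f g :: "real \<Rightarrow> real"
  assumes "strict_mono_on S f \<or> strict_antimono_on S f" "\<And>t. t \<in> S \<Longrightarrow> g t = 1 - f t"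
  shows "mono_on S g \<or> antimono_on S g"
  using assms by (auto simp: monotone_on_def less_le)

lemma opposite_signs_ratio_bounds:
  fixes a b :: real
  assumes "a * b < 0"
  shows "0 < - a / (b - a) \<and> - a / (b - a) < 1"
  using assms by (cases "a > 0") (auto simp: mult_less_0_iff field_simps)

section \<open>Lines, planes and triple products\<close>

lemma line_through_Int_plane:
  fixes A B P g :: "real ^ 3"
  assumes "(B - A) \<bullet> g \<noteq> 0"
  shows "(THE X. X \<in> {X. (X - P) \<bullet> g = 0} \<inter> line_through A B)
           = A + ((P - A) \<bullet> g / ((B - A) \<bullet> g)) *\<^sub>R (B - A)"
proof (rule the_equality)
  have on_plane: "(A + \<mu> *\<^sub>R (B - A) - P) \<bullet> g = 0 \<longleftrightarrow> \<mu> = (P - A) \<bullet> g / ((B - A) \<bullet> g)" for \<mu>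
    using assms by (auto simp: inner_diff_left inner_add_left field_simps)
  show "A + ((P - A) \<bullet> g / ((B - A) \<bullet> g)) *\<^sub>R (B - A) \<in> {X. (X - P) \<bullet> g = 0} \<inter> line_through A B"
    using on_plane by (auto simp: line_through_def)
  show "X = A + ((P - A) \<bullet> g / ((B - A) \<bullet> g)) *\<^sub>R (B - A)"
    if "X \<in> {X. (X - P) \<bullet> g = 0} \<inter> line_through A B" for X
    using that on_plane by (auto simp: line_through_def)
qed

lemma dist_ratio_on_line:
  fixes A B :: "real ^ 3"
  assumes "B \<noteq> A"
  shows "dist B (A + \<mu> *\<^sub>R (B - A)) / dist B A = \<bar>1 - \<mu>\<bar>"
proof -
  have "B - (A + \<mu> *\<^sub>R (B - A)) = (1 - \<mu>) *\<^sub>R (B - A)" by (simp add: algebra_simps)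
  then show ?thesis using assms by (simp add: dist_norm)
qed

lemma triple_product_of_orthogonal_to_nonzero:
  fixes d u v w :: "real ^ 3"
  assumes "d \<noteq> 0" "d \<bullet> u = 0" "d \<bullet> v = 0" "d \<bullet> w = 0"
  shows "u \<bullet> cross3 v w = 0"
proof -
  have "(u \<bullet> cross3 v w) *\<^sub>R d
          = (d \<bullet> u) *\<^sub>R cross3 v w + (d \<bullet> v) *\<^sub>R cross3 w u + (d \<bullet> w) *\<^sub>R cross3 u v"
    by (simp add: cross3_simps) (auto simp: forall_3 algebra_simps)
  then show ?thesis using assms by simp
qed

section \<open>Rational space curves\<close>

definition rcurve_dom :: "real poly ^ 3 \<Rightarrow> real set" where
  "rcurve_dom Q = {t. \<forall>i. poly (Q $ i) t \<noteq> 0}"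

definition rcurve_deriv_pq :: "(real poly ^ 3) \<times> (real poly ^ 3) \<Rightarrow> (real poly ^ 3) \<times> (real poly ^ 3)" where
  "rcurve_deriv_pq =
     (\<lambda>(P, Q). ((\<chi> i. pderiv (P $ i) * Q $ i - P $ i * pderiv (Q $ i)), (\<chi> i. Q $ i * Q $ i)))"

definition rcurve_deriv :: "real poly ^ 3 \<Rightarrow> real poly ^ 3 \<Rightarrow> nat \<Rightarrow> real \<Rightarrow> real ^ 3" where
  "rcurve_deriv P Q n = case_prod rcurve ((rcurve_deriv_pq ^^ n) (P, Q))"

lemma open_rcurve_dom: "open (rcurve_dom Q)"
proof -
  have "rcurve_dom Q = (\<Inter>i. {t. poly (Q $ i) t \<noteq> 0})" by (auto simp: rcurve_dom_def)
  moreover have "open {t. poly (Q $ i) t \<noteq> 0}" for i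
    by (intro open_Collect_neq continuous_intros)
  ultimately show ?thesis by auto
qed

lemma rcurve_dom_deriv_pq: "rcurve_dom (snd ((rcurve_deriv_pq ^^ n) (P, Q))) = rcurve_dom Q"
proof (induction n)
  case (Suc n)
  then show ?case
    by (simp add: rcurve_deriv_pq_def rcurve_dom_def split_beta)
qed simp

lemma rcurve_has_vector_derivative:
  assumes "t \<in> rcurve_dom Q"
  shows "(rcurve P Q has_vector_derivative case_prod rcurve (rcurve_deriv_pq (P, Q)) t) (at t)"
proof -
  have "((\<lambda>t. poly (P $ i) t / poly (Q $ i) t) has_real_derivative
        (poly (pderiv (P $ i)) t * poly (Q $ i) t - poly (P $ i) t * poly (pderiv (Q $ i)) t)
          / (poly (Q $ i) t * poly (Q $ i) t)) (at t)" for i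
    using assms by (intro DERIV_divide poly_DERIV) (auto simp: rcurve_dom_def)
  then show ?thesis
    unfolding rcurve_def rcurve_deriv_pq_def
    by (simp add: vec_lambda_has_vector_derivative)
qed

lemma rcurve_deriv_0 [simp]: "rcurve_deriv P Q 0 = rcurve P Q"
  by (simp add: rcurve_deriv_def)

lemma rcurve_deriv_has_vector_derivative:
  assumes "t \<in> rcurve_dom Q"
  shows "(rcurve_deriv P Q n has_vector_derivative rcurve_deriv P Q (Suc n) t) (at t)"
proof -
  obtain P' Q' where pq: "(rcurve_deriv_pq ^^ n) (P, Q) = (P', Q')" by fastforce
  have "t \<in> rcurve_dom Q'" using rcurve_dom_deriv_pq[of n P Q] assms by (simp add: pq)
  then show ?thesis
    using rcurve_has_vector_derivative[of t Q' P'] by (simp add: rcurve_deriv_def pq)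
qed

lemma d1_rcurve_deriv:
  assumes "\<And>y. y \<in> rcurve_dom Q \<Longrightarrow> g y = rcurve_deriv P Q n y" and "t \<in> rcurve_dom Q"
  shows "d1 g t = rcurve_deriv P Q (Suc n) t"
  unfolding d1_def
  by (rule vector_derivative_at, rule has_vector_derivative_transform_within_open
      [OF rcurve_deriv_has_vector_derivative[OF assms(2)] open_rcurve_dom assms(2)])
     (simp add: assms(1))

definition rational_on :: "real set \<Rightarrow> (real \<Rightarrow> real) \<Rightarrow> bool" where
  "rational_on S f \<longleftrightarrow> (\<exists>p q. \<forall>t\<in>S. poly q t \<noteq> 0 \<and> f t = poly p t / poly q t)"

lemma rational_on_rcurve_deriv:
  assumes "S \<subseteq> rcurve_dom Q"
  shows "rational_on S (\<lambda>t. rcurve_deriv P Q n t $ i)"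
proof -
  obtain P' Q' where pq: "(rcurve_deriv_pq ^^ n) (P, Q) = (P', Q')" by fastforce
  have "S \<subseteq> rcurve_dom Q'" using rcurve_dom_deriv_pq[of n P Q] assms by (simp add: pq)
  then show ?thesis
    unfolding rational_on_def rcurve_deriv_def pq
    by (intro exI[of _ "P' $ i"] exI[of _ "Q' $ i"]) (auto simp: rcurve_def rcurve_dom_def)
qed

lemma rational_on_mult:
  assumes "rational_on S f" "rational_on S g"
  shows "rational_on S (\<lambda>t. f t * g t)"
proof -
  obtain p q p' q' where "\<forall>t\<in>S. poly q t \<noteq> 0 \<and> f t = poly p t / poly q t"
    "\<forall>t\<in>S. poly q' t \<noteq> 0 \<and> g t = poly p' t / poly q' t"
    using assms unfolding rational_on_def by blast
  then show ?thesis
    unfolding rational_on_def by (intro exI[of _ "p * p'"] exI[of _ "q * q'"]) auto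
qed

lemma rational_on_diff:
  assumes "rational_on S f" "rational_on S g"
  shows "rational_on S (\<lambda>t. f t - g t)"
proof -
  obtain p q p' q' where "\<forall>t\<in>S. poly q t \<noteq> 0 \<and> f t = poly p t / poly q t"
    "\<forall>t\<in>S. poly q' t \<noteq> 0 \<and> g t = poly p' t / poly q' t"
    using assms unfolding rational_on_def by blast
  then show ?thesis
    unfolding rational_on_def
    by (intro exI[of _ "p * q' - p' * q"] exI[of _ "q * q'"]) (auto simp: field_simps)
qed

lemma rational_on_cross3:
  assumes "\<And>i. rational_on S (\<lambda>t. F t $ i)" "\<And>i. rational_on S (\<lambda>t. G t $ i)"
  shows "rational_on S (\<lambda>t. cross3 (F t) (G t) $ i)"
  using exhaust_3[of i] by (auto simp: cross3_def intro!: rational_on_diff rational_on_mult assms)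

lemma poly_family_common_root_factor:
  fixes p :: "'i::finite \<Rightarrow> real poly"
  assumes "\<exists>i. p i \<noteq> 0"
  obtains m h j where "\<And>i. p i = [:-a, 1:] ^ m * h i" "poly (h j) a \<noteq> 0"
proof -
  define N where "N = {i. p i \<noteq> 0}"
  define m where "m = Min ((\<lambda>i. order a (p i)) ` N)"
  have "m \<in> (\<lambda>i. order a (p i)) ` N" unfolding m_def using assms by (intro Min_in) (auto simp: N_def)
  then obtain j where j: "j \<in> N" "order a (p j) = m" by auto
  define h where "h i = p i div [:-a, 1:] ^ m" for i
  have ph: "p i = [:-a, 1:] ^ m * h i" for i
  proof (cases "i \<in> N")
    case True
    then have "m \<le> order a (p i)" unfolding m_def by (intro Min_le) auto
    then have "[:-a, 1:] ^ m dvd p i" by (simp add: order_divides)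
    then show ?thesis by (simp add: h_def)
  qed (simp add: N_def h_def)
  moreover have "poly (h j) a \<noteq> 0"
  proof
    assume "poly (h j) a = 0"
    then have "[:-a, 1:] dvd h j" by (simp add: poly_eq_0_iff_dvd)
    then have "[:-a, 1:] ^ m * [:-a, 1:] dvd [:-a, 1:] ^ m * h j"
      by (rule mult_dvd_mono[OF dvd_refl])
    then have "[:-a, 1:] ^ Suc m dvd p j" by (simp only: ph[of j] power_Suc2)
    then have "Suc m \<le> order a (p j)" using j(1) unfolding order_divides by (simp add: N_def)
    then show False using j(2) by simp
  qed
  ultimately show thesis using that by blast
qed

text \<open>Near \<open>t\<^sub>0\<close> a rational vector function is \<open>(t - t\<^sub>0)^m\<close> times a rational function
  that does not vanish at \<open>t\<^sub>0\<close>, so its direction has a limit from the right.\<close>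

lemma rational_vector_factor_at:
  fixes F :: "real \<Rightarrow> real ^ 'n"
  assumes "t0 \<in> S" and rat: "\<And>i. rational_on S (\<lambda>t. F t $ i)" and nz: "\<exists>t\<in>S. F t \<noteq> 0"
  obtains m G where "\<And>t. t \<in> S \<Longrightarrow> F t = (t - t0) ^ m *\<^sub>R G t" "isCont G t0" "G t0 \<noteq> 0"
proof -
  obtain p q where pq: "\<And>i t. t \<in> S \<Longrightarrow> poly (q i) t \<noteq> 0 \<and> F t $ i = poly (p i) t / poly (q i) t"
    using rat unfolding rational_on_def by metis
  have "\<exists>i. p i \<noteq> 0"
  proof (rule ccontr)
    assume "\<not> (\<exists>i. p i \<noteq> 0)"
    then have "\<forall>t\<in>S. F t = 0" using pq by (auto simp: vec_eq_iff)
    then show False using nz by auto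
  qed
  then obtain m h j where ph: "\<And>i. p i = [:-t0, 1:] ^ m * h i" and hj: "poly (h j) t0 \<noteq> 0"
    using poly_family_common_root_factor by blast
  define G where "G t = (\<chi> i. poly (h i) t / poly (q i) t)" for t
  show thesis
  proof
    show "F t = (t - t0) ^ m *\<^sub>R G t" if "t \<in> S" for t
      using pq[OF that] by (auto simp: vec_eq_iff G_def ph)
    show "G t0 \<noteq> 0"
      using hj pq[OF assms(1), of j] by (auto simp: vec_eq_iff G_def)
    have "isCont (\<lambda>t. poly (h i) t / poly (q i) t) t0" for i
      using pq[OF assms(1), of i] by (intro continuous_intros) auto
    then show "isCont G t0"
      unfolding G_def isCont_def by (auto intro!: tendsto_vec_lambda)
  qed
qed

lemma rational_direction_tendsto_at_right:
  fixes F :: "real \<Rightarrow> real ^ 'n"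
  assumes S: "open S" "t0 \<in> S" and "\<And>i. rational_on S (\<lambda>t. F t $ i)" "\<exists>t\<in>S. F t \<noteq> 0"
  shows "\<exists>L. ((\<lambda>t. F t /\<^sub>R norm (F t)) \<longlongrightarrow> L) (at_right t0)"
proof -
  obtain m G where FG: "\<And>t. t \<in> S \<Longrightarrow> F t = (t - t0) ^ m *\<^sub>R G t" and "isCont G t0" "G t0 \<noteq> 0"
    using rational_vector_factor_at[OF assms(2-4)] by blast
  then have "isCont (\<lambda>t. G t /\<^sub>R norm (G t)) t0"
    by (intro continuous_intros) auto
  then have "((\<lambda>t. G t /\<^sub>R norm (G t)) \<longlongrightarrow> G t0 /\<^sub>R norm (G t0)) (at_right t0)"
    by (simp add: isCont_def filterlim_at_split)
  moreover have ev: "\<forall>\<^sub>F t in at_right t0. G t /\<^sub>R norm (G t) = F t /\<^sub>R norm (F t)"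
  proof -
    have "\<forall>\<^sub>F t in at_right t0. t \<in> S"
      using eventually_at_in_open'[OF S] unfolding eventually_at_filter by (auto elim: eventually_mono)
    moreover have "\<forall>\<^sub>F t in at_right t0. t0 < t" by (simp add: eventually_at_right_less)
    ultimately show ?thesis by eventually_elim (simp add: FG)
  qed
  ultimately show ?thesis using tendsto_cong[OF ev] by auto
qed

section \<open>The frame of an admissible segment\<close>

locale admissible_arc =
  fixes P Q :: "real poly ^ 3" and I :: "real set" and t0 t1 :: real
  assumes curve: "rational_space_curve P Q I"
    and admissible: "admissible_segment P Q I t0 t1"
begin

abbreviation "r \<equiv> rcurve P Q"
abbreviation "r' \<equiv> rcurve_deriv P Q 1"
abbreviation "r'' \<equiv> rcurve_deriv P Q 2"
abbreviation "r''' \<equiv> rcurve_deriv P Q 3"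
abbreviation "U \<equiv> rcurve_dom Q"

definition "bn t = cross3 (r' t) (r'' t)"
definition "tn t = bn t \<bullet> r''' t"

lemma t0_less_t1: "t0 < t1"
  using admissible by (simp add: admissible_segment_def Let_def)

lemma segment_in_dom: "{t0..t1} \<subseteq> U"
proof -
  have "{t0..t1} \<subseteq> I" using admissible by (simp add: admissible_segment_def Let_def)
  then show ?thesis using curve by (auto simp: rational_space_curve_def rcurve_dom_def)
qed

lemma in_dom: "t0 \<le> t \<Longrightarrow> t \<le> t1 \<Longrightarrow> t \<in> U"
  using segment_in_dom by auto

lemma has_vector_derivative_r: "t \<in> U \<Longrightarrow> (r has_vector_derivative r' t) (at t)"
  and has_vector_derivative_r': "t \<in> U \<Longrightarrow> (r' has_vector_derivative r'' t) (at t)"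
  and has_vector_derivative_r'': "t \<in> U \<Longrightarrow> (r'' has_vector_derivative r''' t) (at t)"
  using rcurve_deriv_has_vector_derivative[of t Q P 0] rcurve_deriv_has_vector_derivative[of t Q P 1]
    rcurve_deriv_has_vector_derivative[of t Q P 2]
  by (simp_all add: numeral_2_eq_2 numeral_3_eq_3)

lemma isCont_r: "t \<in> U \<Longrightarrow> isCont r t"
  and isCont_r': "t \<in> U \<Longrightarrow> isCont r' t"
  and isCont_r'': "t \<in> U \<Longrightarrow> isCont r'' t"
  and isCont_r''': "t \<in> U \<Longrightarrow> isCont r''' t"
  using has_vector_derivative_r has_vector_derivative_r' has_vector_derivative_r''
    rcurve_deriv_has_vector_derivative[of t Q P 3]
  by (blast intro: has_vector_derivative_continuous)+

lemma isCont_bn: "t \<in> U \<Longrightarrow> isCont bn t"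
  unfolding bn_def by (intro continuous_cross isCont_r' isCont_r'')

lemma d1_r: "t \<in> U \<Longrightarrow> d1 r t = r' t"
  using d1_rcurve_deriv[of Q r P 0] by simp

lemma d2_r: "t \<in> U \<Longrightarrow> d2 r t = r'' t"
  unfolding d2_def using d1_rcurve_deriv[of Q "d1 r" P 1] by (simp add: d1_r numeral_2_eq_2)

lemma d3_r: "t \<in> U \<Longrightarrow> d3 r t = r''' t"
  unfolding d3_def using d1_rcurve_deriv[of Q "d2 r" P 2] by (simp add: d2_r numeral_3_eq_3)

lemma nondegenerate:
  assumes "t0 < t" "t \<le> t1"
  shows "bn t \<noteq> 0" "tn t \<noteq> 0" "r' t \<noteq> 0"
proof -
  have "t \<in> U" using segment_in_dom assms by auto
  moreover have "\<not> character_param P Q t"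
    using admissible assms by (simp add: admissible_segment_def Let_def)
  ultimately show "bn t \<noteq> 0" "tn t \<noteq> 0"
    by (auto simp: character_param_def curvature_def torsion_def d1_r d2_r d3_r bn_def tn_def)
  then show "r' t \<noteq> 0" by (auto simp: bn_def)
qed

lemma eventually_in_dom: "t \<in> U \<Longrightarrow> \<forall>\<^sub>F y in at t within S. y \<in> U"
  by (rule filter_leD[OF at_le[OF subset_UNIV]], rule eventually_at_in_open'[OF open_rcurve_dom])

lemma unit_tangent_eq: "t \<in> U \<Longrightarrow> unit_tangent r t = r' t /\<^sub>R norm (r' t)"
  by (simp add: unit_tangent_def d1_r)

lemma unit_binormal_eq: "t \<in> U \<Longrightarrow> unit_binormal r t = bn t /\<^sub>R norm (bn t)"
  by (simp add: unit_binormal_def d1_r d2_r bn_def)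

lemma isCont_unit_tangent:
  assumes "t0 < t" "t \<le> t1"
  shows "isCont (unit_tangent r) t"
proof -
  have t: "t \<in> U" using assms segment_in_dom by auto
  have "isCont (\<lambda>t. r' t /\<^sub>R norm (r' t)) t"
    using nondegenerate(3)[OF assms] by (intro continuous_intros isCont_r' t) auto
  moreover have ev: "\<forall>\<^sub>F y in nhds t. r' y /\<^sub>R norm (r' y) = unit_tangent r y"
    using eventually_nhds_in_open[OF open_rcurve_dom t] by eventually_elim (simp add: unit_tangent_eq)
  ultimately show ?thesis using isCont_cong[OF ev] by simp
qed

lemma isCont_unit_binormal:
  assumes "t0 < t" "t \<le> t1"
  shows "isCont (unit_binormal r) t"
proof -
  have t: "t \<in> U" using assms segment_in_dom by auto
  have "isCont (\<lambda>t. bn t /\<^sub>R norm (bn t)) t"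
    using nondegenerate(1)[OF assms] by (intro continuous_intros isCont_bn t) auto
  moreover have ev: "\<forall>\<^sub>F y in nhds t. bn y /\<^sub>R norm (bn y) = unit_binormal r y"
    using eventually_nhds_in_open[OF open_rcurve_dom t] by eventually_elim (simp add: unit_binormal_eq)
  ultimately show ?thesis using isCont_cong[OF ev] by simp
qed

lemma tendsto_Lim_at_right_t0:
  assumes rat: "\<And>i. rational_on U (\<lambda>t. F t $ i)" and "\<And>t. t \<in> U \<Longrightarrow> G t = F t /\<^sub>R norm (F t)"
    and "\<exists>t\<in>U. F t \<noteq> 0"
  shows "(G \<longlongrightarrow> Lim (at_right t0) G) (at_right t0)"
proof -
  have t0: "t0 \<in> U" using segment_in_dom t0_less_t1 by auto
  obtain L where L: "((\<lambda>t. F t /\<^sub>R norm (F t)) \<longlongrightarrow> L) (at_right t0)"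
    using rational_direction_tendsto_at_right[OF open_rcurve_dom t0 rat assms(3)] by blast
  have ev: "\<forall>\<^sub>F y in at_right t0. F y /\<^sub>R norm (F y) = G y"
    using eventually_in_dom[OF t0] by eventually_elim (simp add: assms(2))
  then have "(G \<longlongrightarrow> L) (at_right t0)" using tendsto_cong[OF ev] L by simp
  moreover from this have "Lim (at_right t0) G = L" by (intro tendsto_Lim) auto
  ultimately show ?thesis by simp
qed

lemma unit_tangent_tendsto_alpha_plus: "(unit_tangent r \<longlongrightarrow> alpha_plus r t0) (at_right t0)"
  unfolding alpha_plus_def
proof (rule tendsto_Lim_at_right_t0[OF rational_on_rcurve_deriv])
  show "\<exists>t\<in>U. r' t \<noteq> 0" using nondegenerate(3)[of t1] t0_less_t1 in_dom[of t1] by auto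
qed (simp_all add: unit_tangent_eq)

lemma unit_binormal_tendsto_gamma_plus: "(unit_binormal r \<longlongrightarrow> gamma_plus r t0) (at_right t0)"
  unfolding gamma_plus_def
proof (rule tendsto_Lim_at_right_t0)
  show "rational_on U (\<lambda>t. bn t $ i)" for i
    unfolding bn_def by (intro rational_on_cross3 rational_on_rcurve_deriv) simp_all
  show "\<exists>t\<in>U. bn t \<noteq> 0" using nondegenerate(1)[of t1] t0_less_t1 in_dom[of t1] by auto
qed (simp add: unit_binormal_eq)

lemma one_sided_frames_interior:
  assumes "t0 < s" "s \<le> t1"
  shows "alpha_plus r s = unit_tangent r s" "alpha_minus r s = unit_tangent r s"
    "gamma_plus r s = unit_binormal r s" "gamma_minus r s = unit_binormal r s"
  using isCont_unit_tangent[OF assms] isCont_unit_binormal[OF assms]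
  unfolding alpha_plus_def alpha_minus_def gamma_plus_def gamma_minus_def isCont_def
  by (auto intro!: tendsto_Lim simp: filterlim_at_split)

text \<open>The unit tangent and binormal on \<open>[t\<^sub>0, t\<^sub>1]\<close>, continuously extended to the possibly
  singular endpoint \<open>t\<^sub>0\<close> by their right limits.\<close>

definition "\<alpha> s = (if s = t0 then alpha_plus r t0 else unit_tangent r s)"
definition "\<gamma> s = (if s = t0 then gamma_plus r t0 else unit_binormal r s)"

lemma continuous_on_\<alpha>: "continuous_on {t0..t1} \<alpha>"
  unfolding \<alpha>_def[abs_def]
  by (rule continuous_on_Icc_extend_at_left[OF t0_less_t1 isCont_unit_tangent unit_tangent_tendsto_alpha_plus])

lemma continuous_on_\<gamma>: "continuous_on {t0..t1} \<gamma>"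
  unfolding \<gamma>_def[abs_def]
  by (rule continuous_on_Icc_extend_at_left[OF t0_less_t1 isCont_unit_binormal unit_binormal_tendsto_gamma_plus])

lemma \<alpha>_eq: "t0 < s \<Longrightarrow> s \<le> t1 \<Longrightarrow> \<alpha> s = r' s /\<^sub>R norm (r' s)"
  using in_dom[of s] by (simp add: \<alpha>_def unit_tangent_eq)

lemma inner_r'_eq: "t0 < u \<Longrightarrow> u \<le> t1 \<Longrightarrow> v \<bullet> r' u = norm (r' u) * (v \<bullet> \<alpha> u)"
  using nondegenerate(3)[of u] by (simp add: \<alpha>_eq)

lemma \<gamma>_eq: "t0 < s \<Longrightarrow> s \<le> t1 \<Longrightarrow> \<gamma> s = bn s /\<^sub>R norm (bn s)"
  using in_dom[of s] by (simp add: \<gamma>_def unit_binormal_eq)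

lemma one_sided_frames:
  shows "t0 \<le> s \<Longrightarrow> s < t1 \<Longrightarrow> alpha_plus r s = \<alpha> s"
    and "t0 \<le> s \<Longrightarrow> s < t1 \<Longrightarrow> gamma_plus r s = \<gamma> s"
    and "t0 < s \<Longrightarrow> s \<le> t1 \<Longrightarrow> alpha_minus r s = \<alpha> s"
    and "t0 < s \<Longrightarrow> s \<le> t1 \<Longrightarrow> gamma_minus r s = \<gamma> s"
  using one_sided_frames_interior[of s] by (auto simp: \<alpha>_def \<gamma>_def le_less)

lemma \<alpha>_\<gamma>_orthogonal:
  assumes "t0 \<le> s" "s \<le> t1"
  shows "\<alpha> s \<bullet> \<gamma> s = 0"
proof (cases "s = t0")
  case True
  have "((\<lambda>s. \<alpha> s \<bullet> \<gamma> s) \<longlongrightarrow> \<alpha> t0 \<bullet> \<gamma> t0) (at t0 within {t0..t1})"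
    using continuous_on_\<alpha> continuous_on_\<gamma> t0_less_t1
    by (intro tendsto_inner) (auto simp: continuous_on_def)
  moreover have ev: "\<forall>\<^sub>F s in at t0 within {t0..t1}. \<alpha> s \<bullet> \<gamma> s = 0"
    by (auto simp: eventually_at_filter \<alpha>_eq \<gamma>_eq dot_cross_self bn_def)
  ultimately have "((\<lambda>s. 0) \<longlongrightarrow> \<alpha> t0 \<bullet> \<gamma> t0) (at t0 within {t0..t1})"
    using tendsto_cong[OF ev] by simp
  then show ?thesis
    using True t0_less_t1 by (simp add: at_within_Icc_at_right tendsto_const_iff)
qed (use assms in \<open>simp add: \<alpha>_eq \<gamma>_eq dot_cross_self bn_def\<close>)

lemma osc_plane_eq: "t0 < t \<Longrightarrow> t \<le> t1 \<Longrightarrow> osc_plane r t = {X. (X - r t) \<bullet> \<gamma> t = 0}"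
  by (simp add: osc_plane_def \<gamma>_def)

lemma continuous_on_r: "continuous_on {t0..t1} r"
  using segment_in_dom by (intro continuous_at_imp_continuous_on) (auto intro: isCont_r)

section \<open>Heights and tilts between osculating planes and tangents\<close>

text \<open>\<open>height s u\<close> is the signed distance of \<open>r s\<close> from the osculating plane at \<open>u\<close>, and
  \<open>tilt s u\<close> measures how far the tangent at \<open>s\<close> is from being parallel to that plane.\<close>

definition "height s u = (r s - r u) \<bullet> \<gamma> u"
definition "tilt s u = \<alpha> s \<bullet> \<gamma> u"

lemma admissible_frame:
  assumes "t0 \<le> s" "s < u" "u \<le> t1"
  shows "tilt s u \<noteq> 0" "tilt u s \<noteq> 0" "cross3 (\<alpha> s) (r u - r s) \<bullet> \<alpha> u \<noteq> 0"
    "height s u \<noteq> 0" "height u s \<noteq> 0"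
proof -
  have "alpha_plus r s \<bullet> gamma_minus r u \<noteq> 0 \<and> alpha_minus r u \<bullet> gamma_plus r s \<noteq> 0 \<and>
        cross3 (alpha_plus r s) (r u - r s) \<bullet> alpha_minus r u \<noteq> 0 \<and>
        (r s - r u) \<bullet> gamma_minus r u \<noteq> 0 \<and> (r u - r s) \<bullet> gamma_plus r s \<noteq> 0"
    using admissible assms unfolding admissible_segment_def Let_def by blast
  then show "tilt s u \<noteq> 0" "tilt u s \<noteq> 0" "cross3 (\<alpha> s) (r u - r s) \<bullet> \<alpha> u \<noteq> 0"
    "height s u \<noteq> 0" "height u s \<noteq> 0"
    using assms one_sided_frames[of s] one_sided_frames[of u] by (auto simp: tilt_def height_def)
qed

lemma height_nonzero: "s \<in> {t0..t1} \<Longrightarrow> u \<in> {t0..t1} \<Longrightarrow> s \<noteq> u \<Longrightarrow> height s u \<noteq> 0"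
  using admissible_frame(4)[of s u] admissible_frame(5)[of u s] by (cases "s < u") auto

lemma tilt_nonzero: "s \<in> {t0..t1} \<Longrightarrow> u \<in> {t0..t1} \<Longrightarrow> s \<noteq> u \<Longrightarrow> tilt s u \<noteq> 0"
  using admissible_frame(1)[of s u] admissible_frame(2)[of u s] by (cases "s < u") auto

lemma tangent_triple_nonzero:
  assumes "s \<in> {t0..t1}" "u \<in> {t0..t1}" "s \<noteq> u"
  shows "cross3 (r u - r s) (\<alpha> s) \<bullet> \<alpha> u \<noteq> 0"
proof (cases "s < u")
  case True
  then show ?thesis using admissible_frame(3)[of s u] assms by (auto simp: cross3_simps)
next
  case False
  then show ?thesis using admissible_frame(3)[of u s] assms by (auto simp: cross3_simps)
qed

lemma continuous_on_height: "continuous_on ({t0..t1} \<times> {t0..t1}) (\<lambda>z. height (fst z) (snd z))"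
  and continuous_on_height_swap: "continuous_on ({t0..t1} \<times> {t0..t1}) (\<lambda>z. height (snd z) (fst z))"
  and continuous_on_tilt: "continuous_on ({t0..t1} \<times> {t0..t1}) (\<lambda>z. tilt (fst z) (snd z))"
  and continuous_on_tilt_swap: "continuous_on ({t0..t1} \<times> {t0..t1}) (\<lambda>z. tilt (snd z) (fst z))"
  unfolding height_def tilt_def
  by (intro continuous_intros continuous_on_Times_fst continuous_on_Times_snd
      continuous_on_r continuous_on_\<alpha> continuous_on_\<gamma>)+

lemma taylor_height:
  assumes "x \<in> {t0..t1}" "y \<in> {t0..t1}" "x \<noteq> y"
  obtains \<xi> where "min x y < \<xi>" "\<xi> < max x y" "(r x - r y) \<bullet> bn y = (x - y) ^ 3 / 6 * (r''' \<xi> \<bullet> bn y)"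
proof -
  define diff where "diff m z = (if m = 0 then (r z - r y) \<bullet> bn y else rcurve_deriv P Q m z \<bullet> bn y)"
    for m z
  have "(diff m has_real_derivative diff (Suc m) t) (at t)" if "min x y \<le> t" "t \<le> max x y" for m t
  proof -
    have t: "t \<in> U" using that assms by (intro in_dom) auto
    have "((\<lambda>z. r z - r y) has_vector_derivative r' t - 0) (at t)"
      by (intro has_vector_derivative_diff has_vector_derivative_r t has_vector_derivative_const)
    moreover have "(rcurve_deriv P Q m has_vector_derivative rcurve_deriv P Q (Suc m) t) (at t)"
      by (rule rcurve_deriv_has_vector_derivative[OF t])
    ultimately show ?thesis
      unfolding diff_def by (cases "m = 0") (auto intro: has_real_derivative_inner_const)
  qed
  moreover have "diff m y = 0" if "m < 3" for m
    using that by (auto simp: diff_def bn_def dot_cross_self less_Suc_eq numeral_2_eq_2 numeral_3_eq_3)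
  ultimately obtain \<xi> where "min x y < \<xi>" "\<xi> < max x y" "diff 0 x = diff 3 \<xi> / fact 3 * (x - y) ^ 3"
    using Taylor_vanishing_derivatives[of 3 diff "diff 0" x y] assms(3) by auto
  moreover have "fact 3 = (6::real)" by (simp add: numeral_3_eq_3)
  ultimately show ?thesis using that by (simp add: diff_def)
qed

lemma taylor_tilt:
  assumes "x \<in> {t0..t1}" "y \<in> {t0..t1}" "x \<noteq> y"
  obtains \<xi> where "min x y < \<xi>" "\<xi> < max x y" "r' x \<bullet> bn y = (x - y) ^ 2 / 2 * (r''' \<xi> \<bullet> bn y)"
proof -
  define diff where "diff m z = rcurve_deriv P Q (Suc m) z \<bullet> bn y" for m z
  have "(diff m has_real_derivative diff (Suc m) t) (at t)" if "min x y \<le> t" "t \<le> max x y" for m t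
    unfolding diff_def using that assms
    by (intro has_real_derivative_inner_const rcurve_deriv_has_vector_derivative in_dom) auto
  moreover have "diff m y = 0" if "m < 2" for m
    using that by (auto simp: diff_def bn_def dot_cross_self less_Suc_eq numeral_2_eq_2)
  ultimately obtain \<xi> where "min x y < \<xi>" "\<xi> < max x y" "diff 0 x = diff 2 \<xi> / fact 2 * (x - y) ^ 2"
    using Taylor_vanishing_derivatives[of 2 diff "diff 0" x y] assms(3) by auto
  then show ?thesis using that by (simp add: diff_def numeral_2_eq_2 numeral_3_eq_3)
qed

lemma third_derivative_close:
  assumes "t0 < p" "p < t1"
  obtains d where "d > 0" "\<And>\<xi> y. \<bar>\<xi> - p\<bar> < d \<Longrightarrow> \<bar>y - p\<bar> < d \<Longrightarrow> \<bar>r''' \<xi> \<bullet> bn y - tn p\<bar> < \<bar>tn p\<bar> / 2"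
proof -
  have p: "p \<in> U" using assms by (intro in_dom) auto
  define g where "g z = r''' (fst z) \<bullet> bn (snd z)" for z :: "real \<times> real"
  have "isCont (\<lambda>z. r''' (fst z)) (p, p)"
    by (rule isCont_o2[where f = fst]) (simp_all add: isCont_r''' p continuous_intros)
  moreover have "isCont (\<lambda>z. bn (snd z)) (p, p)"
    by (rule isCont_o2[where f = snd]) (simp_all add: isCont_bn p continuous_intros)
  ultimately have "isCont g (p, p)" unfolding g_def by (intro continuous_intros)
  moreover have "tn p \<noteq> 0" using nondegenerate(2) assms by auto
  ultimately obtain d where d: "d > 0" "\<And>z. dist z (p, p) < d \<Longrightarrow> dist (g z) (g (p, p)) < \<bar>tn p\<bar> / 2"
    unfolding continuous_at_eps_delta by (metis zero_less_abs_iff half_gt_zero)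
  have "\<bar>r''' \<xi> \<bullet> bn y - tn p\<bar> < \<bar>tn p\<bar> / 2" if "\<bar>\<xi> - p\<bar> < d / 2" "\<bar>y - p\<bar> < d / 2" for \<xi> y
  proof -
    have "dist (\<xi>, y) (p, p) \<le> \<bar>\<xi> - p\<bar> + \<bar>y - p\<bar>"
      using sqrt_sum_squares_le_sum_abs[of "\<xi> - p" "y - p"] by (simp add: dist_Pair_Pair dist_real_def)
    then show ?thesis
      using d(2)[of "(\<xi>, y)"] that by (simp add: g_def tn_def dist_real_def inner_commute)
  qed
  then show ?thesis using that d(1) by (metis half_gt_zero)
qed

lemma height_tilt_expansion:
  assumes "t0 < x" "x \<le> t1" "t0 < y" "y \<le> t1" "x \<noteq> y"
  obtains \<xi> \<eta> where "min x y < \<xi>" "\<xi> < max x y" "min x y < \<eta>" "\<eta> < max x y"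
    "height x y = (x - y) ^ 3 / 6 * (r''' \<xi> \<bullet> bn y) / norm (bn y)"
    "tilt x y = (x - y) ^ 2 / 2 * (r''' \<eta> \<bullet> bn y) / (norm (r' x) * norm (bn y))"
proof -
  have seg: "x \<in> {t0..t1}" "y \<in> {t0..t1}" using assms by auto
  obtain \<xi> where \<xi>: "min x y < \<xi>" "\<xi> < max x y"
    and h: "(r x - r y) \<bullet> bn y = (x - y) ^ 3 / 6 * (r''' \<xi> \<bullet> bn y)"
    using taylor_height[OF seg assms(5)] by blast
  obtain \<eta> where \<eta>: "min x y < \<eta>" "\<eta> < max x y"
    and a: "r' x \<bullet> bn y = (x - y) ^ 2 / 2 * (r''' \<eta> \<bullet> bn y)"
    using taylor_tilt[OF seg assms(5)] by blast
  have "height x y = ((r x - r y) \<bullet> bn y) / norm (bn y)"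
    using assms by (simp add: height_def \<gamma>_eq field_simps)
  moreover have "tilt x y = (r' x \<bullet> bn y) / (norm (r' x) * norm (bn y))"
    using assms by (simp add: tilt_def \<alpha>_eq \<gamma>_eq field_simps)
  ultimately show thesis using that \<xi> \<eta> by (simp only: h a)
qed

lemma near_diagonal:
  assumes "t0 < p" "p < t1"
  obtains d where "d > 0" "\<And>x y. \<bar>x - p\<bar> < d \<Longrightarrow> \<bar>y - p\<bar> < d \<Longrightarrow> x \<noteq> y \<Longrightarrow>
      0 < tn p * (x - y) * height x y \<and> 0 < tn p * tilt x y \<and>
      \<bar>height x y\<bar> \<le> 4 / 3 * norm (r' x) * \<bar>x - y\<bar> * \<bar>tilt x y\<bar>"
proof -
  obtain d0 where d0: "d0 > 0"
    "\<And>\<xi> y. \<bar>\<xi> - p\<bar> < d0 \<Longrightarrow> \<bar>y - p\<bar> < d0 \<Longrightarrow> \<bar>r''' \<xi> \<bullet> bn y - tn p\<bar> < \<bar>tn p\<bar> / 2"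
    using third_derivative_close[OF assms] by blast
  define d where "d = min d0 (min (p - t0) (t1 - p))"
  have "d > 0" using d0(1) assms by (simp add: d_def)
  moreover have "0 < tn p * (x - y) * height x y \<and> 0 < tn p * tilt x y \<and>
      \<bar>height x y\<bar> \<le> 4 / 3 * norm (r' x) * \<bar>x - y\<bar> * \<bar>tilt x y\<bar>"
    if xy: "\<bar>x - p\<bar> < d" "\<bar>y - p\<bar> < d" "x \<noteq> y" for x y
  proof -
    have x: "t0 < x" "x < t1" and y: "t0 < y" "y < t1" using xy by (auto simp: d_def)
    obtain \<xi> \<eta> where "min x y < \<xi>" "\<xi> < max x y" "min x y < \<eta>" "\<eta> < max x y"
      and height: "height x y = (x - y) ^ 3 / 6 * (r''' \<xi> \<bullet> bn y) / norm (bn y)"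
      and tilt: "tilt x y = (x - y) ^ 2 / 2 * (r''' \<eta> \<bullet> bn y) / (norm (r' x) * norm (bn y))"
      using height_tilt_expansion[of x y] x y xy(3) by auto
    then have "\<bar>\<xi> - p\<bar> < d0" "\<bar>\<eta> - p\<bar> < d0" "\<bar>y - p\<bar> < d0"
      using xy by (auto simp: d_def abs_less_iff min_def max_def split: if_splits)
    then have "\<bar>r''' \<xi> \<bullet> bn y - tn p\<bar> < \<bar>tn p\<bar> / 2" "\<bar>r''' \<eta> \<bullet> bn y - tn p\<bar> < \<bar>tn p\<bar> / 2"
      using d0(2) by blast+
    moreover have close: "tn p * g > 0 \<and> \<bar>g\<bar> < 2 * \<bar>tn p\<bar> \<and> \<bar>tn p\<bar> < 2 * \<bar>g\<bar>"
      if "\<bar>g - tn p\<bar> < \<bar>tn p\<bar> / 2" for g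
      using that by (auto simp: abs_if zero_less_mult_iff split: if_splits)
    ultimately have g: "tn p * (r''' \<xi> \<bullet> bn y) > 0" "\<bar>r''' \<xi> \<bullet> bn y\<bar> < 2 * \<bar>tn p\<bar>"
        "tn p * (r''' \<eta> \<bullet> bn y) > 0" "\<bar>tn p\<bar> < 2 * \<bar>r''' \<eta> \<bullet> bn y\<bar>"
      by blast+
    have nb: "norm (bn y) > 0" "norm (r' x) > 0" using nondegenerate[of y] nondegenerate[of x] x y by auto
    have "tn p * (x - y) * height x y = (x - y) ^ 4 / 6 * (tn p * (r''' \<xi> \<bullet> bn y)) / norm (bn y)"
      by (simp add: height power_numeral_reduce algebra_simps)
    moreover have "(x - y) ^ 4 > 0" using xy(3) by simp
    ultimately have "0 < tn p * (x - y) * height x y" using g(1) nb by simp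
    moreover have "0 < tn p * tilt x y"
    proof -
      have "tn p * tilt x y = (x - y) ^ 2 / 2 * (tn p * (r''' \<eta> \<bullet> bn y)) / (norm (r' x) * norm (bn y))"
        by (simp add: tilt algebra_simps)
      moreover have "(x - y) ^ 2 > 0" using xy(3) by simp
      ultimately show ?thesis using g(3) nb by (auto intro!: divide_pos_pos mult_pos_pos)
    qed
    moreover have "\<bar>height x y\<bar> \<le> 4 / 3 * norm (r' x) * \<bar>x - y\<bar> * \<bar>tilt x y\<bar>"
    proof -
      have "\<bar>height x y\<bar> = \<bar>x - y\<bar> ^ 3 / 6 * \<bar>r''' \<xi> \<bullet> bn y\<bar> / norm (bn y)"
        by (simp add: height abs_mult power_abs)
      also have "\<dots> \<le> \<bar>x - y\<bar> ^ 3 / 6 * (4 * \<bar>r''' \<eta> \<bullet> bn y\<bar>) / norm (bn y)"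
        using g(2,4) nb by (intro divide_right_mono mult_left_mono) auto
      also have "\<dots> = 4 / 3 * norm (r' x) * \<bar>x - y\<bar> * \<bar>tilt x y\<bar>"
        using nb by (simp add: tilt abs_mult power_abs power2_eq_square power3_eq_cube)
      finally show ?thesis .
    qed
    ultimately show ?thesis by blast
  qed
  ultimately show ?thesis using that by blast
qed

definition "Tri = {t0..t1} \<times> {t0..t1} \<inter> {z. fst z < snd z}"

lemma sign_constant_on_Tri:
  assumes "continuous_on Tri (\<lambda>z. F (fst z) (snd z))" "\<And>s u. t0 \<le> s \<Longrightarrow> s < u \<Longrightarrow> u \<le> t1 \<Longrightarrow> F s u \<noteq> 0"
    and "t0 \<le> s" "s < u" "u \<le> t1" "t0 \<le> s'" "s' < u'" "u' \<le> t1"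
  shows "F s u > (0::real) \<longleftrightarrow> F s' u' > 0"
proof -
  have "connected Tri"
    unfolding Tri_def by (intro convex_connected convex_Times_Int_less) auto
  moreover have "\<forall>z\<in>Tri. F (fst z) (snd z) \<noteq> 0" using assms(2) by (auto simp: Tri_def)
  ultimately show ?thesis
    using sign_constant_on_connected[of Tri "\<lambda>z. F (fst z) (snd z)" "(s, u)" "(s', u')"] assms(1,3-)
    by (auto simp: Tri_def)
qed

lemma continuous_on_Tri_square:
  "continuous_on ({t0..t1} \<times> {t0..t1}) f \<Longrightarrow> continuous_on Tri f"
  by (rule continuous_on_subset) (auto simp: Tri_def)

lemma swapped_signs_near_diagonal:
  obtains p v where "t0 \<le> p" "p < v" "v \<le> t1"
    "height p v > 0 \<longleftrightarrow> height v p < 0" "tilt p v > 0 \<longleftrightarrow> tilt v p > 0"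
proof -
  define p where "p = (t0 + t1) / 2"
  have p: "t0 < p" "p < t1" using t0_less_t1 by (auto simp: p_def)
  obtain d where d: "d > 0" "\<And>x y. \<bar>x - p\<bar> < d \<Longrightarrow> \<bar>y - p\<bar> < d \<Longrightarrow> x \<noteq> y \<Longrightarrow>
      0 < tn p * (x - y) * height x y \<and> 0 < tn p * tilt x y"
    using near_diagonal[OF p] by metis
  define v where "v = p + min d (t1 - p) / 2"
  have v: "p < v" "v \<le> t1" "\<bar>v - p\<bar> < d" using d(1) p by (auto simp: v_def min_def field_simps)
  have "0 < tn p * (p - v) * height p v" "0 < tn p * (v - p) * height v p"
      "0 < tn p * tilt p v" "0 < tn p * tilt v p"
    using d(1) d(2)[of p v] d(2)[of v p] v by auto
  then have "height p v > 0 \<longleftrightarrow> height v p < 0" "tilt p v > 0 \<longleftrightarrow> tilt v p > 0"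
    using v(1) by (auto simp: zero_less_mult_iff right_diff_distrib)
  then show thesis using p v by (intro that[of p v]) auto
qed

lemma height_tilt_signs:
  assumes "t0 \<le> s" "s < u" "u \<le> t1" "t0 \<le> s'" "s' < u'" "u' \<le> t1"
  shows "height s u > 0 \<longleftrightarrow> height u' s' < 0" "tilt s u > 0 \<longleftrightarrow> tilt u' s' > 0"
proof -
  obtain p v where pv: "t0 \<le> p" "p < v" "v \<le> t1"
    and swap: "height p v > 0 \<longleftrightarrow> height v p < 0" "tilt p v > 0 \<longleftrightarrow> tilt v p > 0"
    using swapped_signs_near_diagonal by blast
  have nz: "\<And>s u. t0 \<le> s \<Longrightarrow> s < u \<Longrightarrow> u \<le> t1 \<Longrightarrow> height s u \<noteq> 0 \<and> height u s \<noteq> 0 \<and>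
      tilt s u \<noteq> 0 \<and> tilt u s \<noteq> 0"
    using admissible_frame by blast
  have "height s u > 0 \<longleftrightarrow> height p v > 0"
    by (rule sign_constant_on_Tri[OF continuous_on_Tri_square[OF continuous_on_height]])
       (use nz assms pv in auto)
  moreover have "height u' s' > 0 \<longleftrightarrow> height v p > 0"
    by (rule sign_constant_on_Tri[where F = "\<lambda>s u. height u s",
          OF continuous_on_Tri_square[OF continuous_on_height_swap]])
       (use nz assms pv in auto)
  moreover have "height u' s' \<noteq> 0" "height v p \<noteq> 0" using nz assms pv by auto
  ultimately show "height s u > 0 \<longleftrightarrow> height u' s' < 0" using swap(1) by force
  have "tilt s u > 0 \<longleftrightarrow> tilt p v > 0"
    by (rule sign_constant_on_Tri[OF continuous_on_Tri_square[OF continuous_on_tilt]])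
       (use nz assms pv in auto)
  moreover have "tilt u' s' > 0 \<longleftrightarrow> tilt v p > 0"
    by (rule sign_constant_on_Tri[where F = "\<lambda>s u. tilt u s",
          OF continuous_on_Tri_square[OF continuous_on_tilt_swap]])
       (use nz assms pv in auto)
  ultimately show "tilt s u > 0 \<longleftrightarrow> tilt u' s' > 0" using swap(2) by blast
qed

section \<open>Where lines meet the osculating planes\<close>

definition "osc_param A w u = ((r u - A) \<bullet> \<gamma> u) / (w \<bullet> \<gamma> u)"

lemma continuous_on_osc_param:
  assumes "S \<subseteq> {t0..t1}" "\<And>u. u \<in> S \<Longrightarrow> w \<bullet> \<gamma> u \<noteq> 0"
  shows "continuous_on S (osc_param A w)"
  unfolding osc_param_def[abs_def] using assms
  by (intro continuous_intros continuous_on_subset[OF continuous_on_r]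
      continuous_on_subset[OF continuous_on_\<gamma>]) auto

lemma osc_param_has_real_derivative:
  assumes "t0 < t" "t \<le> t1" "w \<bullet> bn t \<noteq> 0"
  shows "(osc_param A w has_real_derivative - tn t * (cross3 (r t - A) w \<bullet> r' t) / (w \<bullet> bn t) ^ 2) (at t)"
proof -
  have t: "t \<in> U" using assms by (intro in_dom) auto
  have bn': "(bn has_vector_derivative cross3 (r' t) (r''' t)) (at t)"
    using bounded_bilinear.has_vector_derivative[OF bilinear_conv_bounded_bilinear[THEN iffD1, OF bilinear_cross]
        has_vector_derivative_r'[OF t] has_vector_derivative_r''[OF t]]
    by (simp add: bn_def[abs_def])
  have "((\<lambda>u. (r u - A) \<bullet> bn u) has_vector_derivative
          (r t - A) \<bullet> cross3 (r' t) (r''' t) + (r' t - 0) \<bullet> bn t) (at t)"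
    by (intro bounded_bilinear.has_vector_derivative[OF bounded_bilinear_inner] bn'
        has_vector_derivative_diff has_vector_derivative_r t has_vector_derivative_const)
  then have num: "((\<lambda>u. (r u - A) \<bullet> bn u) has_real_derivative (r t - A) \<bullet> cross3 (r' t) (r''' t)) (at t)"
    by (simp add: has_real_derivative_iff_has_vector_derivative bn_def dot_cross_self)
  have den: "((\<lambda>u. w \<bullet> bn u) has_real_derivative w \<bullet> cross3 (r' t) (r''' t)) (at t)"
    using has_real_derivative_inner_const[OF bn', of w] by (simp add: inner_commute)
  have deriv: "((\<lambda>u. ((r u - A) \<bullet> bn u) / (w \<bullet> bn u)) has_real_derivative
          - tn t * (cross3 (r t - A) w \<bullet> r' t) / (w \<bullet> bn t) ^ 2) (at t)"
    using DERIV_divide[OF num den assms(3)]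
    by (simp add: tn_def bn_def power2_eq_square cross3_simps)
  have "((r y - A) \<bullet> bn y) / (w \<bullet> bn y) = osc_param A w y" if "y \<in> {t0<..} \<inter> U" for y
    using that by (cases "bn y = 0") (auto simp: osc_param_def \<gamma>_def unit_binormal_eq divide_inverse)
  moreover have "open ({t0<..} \<inter> U)" by (intro open_Int open_rcurve_dom) simp
  ultimately show ?thesis
    using has_field_derivative_transform_within_open[OF deriv] assms(1) t by blast
qed

lemma osc_param_inj:
  assumes "is_interval S" "S \<subseteq> {t0..t1}" "\<And>u. u \<in> S \<Longrightarrow> w \<bullet> \<gamma> u \<noteq> 0"
    and "\<And>u. u \<in> S \<Longrightarrow> t0 < u \<Longrightarrow> u < t1 \<Longrightarrow> cross3 (r u - A) w \<bullet> r' u \<noteq> 0"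
  shows "inj_on (osc_param A w) S"
proof (rule inj_on_if_deriv_nonzero[OF assms(1) continuous_on_osc_param[OF assms(2,3)],
      where F' = "\<lambda>x. - tn x * (cross3 (r x - A) w \<bullet> r' x) / (w \<bullet> bn x) ^ 2"])
  fix x assume "x \<in> interior S"
  then have x: "x \<in> S" "t0 < x" "x < t1"
    using interior_subset interior_mono[OF assms(2)] by auto
  then have "w \<bullet> bn x \<noteq> 0" using assms(3)[OF x(1)] by (auto simp: \<gamma>_eq)
  then show "(osc_param A w has_real_derivative - tn x * (cross3 (r x - A) w \<bullet> r' x) / (w \<bullet> bn x) ^ 2) (at x)
      \<and> - tn x * (cross3 (r x - A) w \<bullet> r' x) / (w \<bullet> bn x) ^ 2 \<noteq> 0"
    using osc_param_has_real_derivative[of x w A] nondegenerate(2)[of x] assms(4)[OF x] x by auto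
qed

text \<open>\<open>tpar s u\<close>: the tangent line at \<open>s\<close> meets the osculating plane at \<open>u\<close> in \<open>r s + tpar s u \<alpha> s\<close>.\<close>

definition "tpar s = osc_param (r s) (\<alpha> s)"

lemma tpar_eq: "tpar s u = - height s u / tilt s u"
  by (simp add: tpar_def osc_param_def height_def tilt_def inner_diff_left)

lemma tpar_nonzero: "s \<in> {t0..t1} \<Longrightarrow> u \<in> {t0..t1} \<Longrightarrow> s \<noteq> u \<Longrightarrow> tpar s u \<noteq> 0"
  using height_nonzero tilt_nonzero by (simp add: tpar_eq)

lemma continuous_on_tpar:
  assumes "continuous_on S a" "continuous_on S b" "\<And>z. z \<in> S \<Longrightarrow> a z \<in> {t0..t1} \<and> b z \<in> {t0..t1} \<and> a z \<noteq> b z"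
  shows "continuous_on S (\<lambda>z. tpar (a z) (b z))"
proof -
  have comp: "continuous_on S (\<lambda>z. f (c z))"
    if "continuous_on {t0..t1} f" "continuous_on S c" "\<And>z. z \<in> S \<Longrightarrow> c z \<in> {t0..t1}"
    for f :: "real \<Rightarrow> real ^ 3" and c
    using that by (intro continuous_on_compose2[OF that(1,2)]) auto
  have "continuous_on S (\<lambda>z. r (a z))" "continuous_on S (\<lambda>z. r (b z))"
    "continuous_on S (\<lambda>z. \<alpha> (a z))" "continuous_on S (\<lambda>z. \<gamma> (b z))"
    using assms by (auto intro!: comp continuous_on_r continuous_on_\<alpha> continuous_on_\<gamma>)
  moreover have "tilt (a z) (b z) \<noteq> 0" if "z \<in> S" for z
    using assms(3)[OF that] by (intro tilt_nonzero) auto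
  ultimately show ?thesis
    unfolding tpar_eq height_def tilt_def by (intro continuous_intros) auto
qed

lemma tpar_inj:
  assumes "is_interval S" "S \<subseteq> {t0..t1}" "s \<in> {t0..t1}" "s \<notin> S"
  shows "inj_on (tpar s) S"
  unfolding tpar_def
proof (rule osc_param_inj[OF assms(1,2)])
  fix u assume u: "u \<in> S"
  then show "\<alpha> s \<bullet> \<gamma> u \<noteq> 0" using tilt_nonzero assms by (fastforce simp: tilt_def)
  assume "t0 < u" "u < t1"
  then show "cross3 (r u - r s) (\<alpha> s) \<bullet> r' u \<noteq> 0"
    using tangent_triple_nonzero[of s u] nondegenerate(3)[of u] inner_r'_eq[of u] u assms by auto
qed

lemma tpar_signs:
  assumes "t0 \<le> s" "s < u" "u \<le> t1" "t0 \<le> s'" "s' < u'" "u' \<le> t1"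
  shows "tpar s u > 0 \<longleftrightarrow> tpar s' u' > 0" "tpar u s > 0 \<longleftrightarrow> tpar u' s' > 0"
proof -
  show "tpar s u > 0 \<longleftrightarrow> tpar s' u' > 0"
    by (rule sign_constant_on_Tri[OF continuous_on_tpar])
       (use tpar_nonzero assms in \<open>auto simp: Tri_def intro: continuous_intros\<close>)
  show "tpar u s > 0 \<longleftrightarrow> tpar u' s' > 0"
    by (rule sign_constant_on_Tri[where F = "\<lambda>s u. tpar u s", OF continuous_on_tpar])
       (use tpar_nonzero assms in \<open>auto simp: Tri_def intro: continuous_intros\<close>)
qed

lemma tpar_tendsto_0:
  assumes "t0 < p" "p < t1"
  shows "(tpar p \<longlongrightarrow> 0) (at p)"
proof (rule Lim_null_comparison)
  obtain d where d: "d > 0" "\<And>y. \<bar>y - p\<bar> < d \<Longrightarrow> p \<noteq> y \<Longrightarrow>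
      \<bar>height p y\<bar> \<le> 4 / 3 * norm (r' p) * \<bar>p - y\<bar> * \<bar>tilt p y\<bar>"
    using near_diagonal[OF assms] by (metis abs_0 diff_self)
  show "\<forall>\<^sub>F y in at p. norm (tpar p y) \<le> 4 / 3 * norm (r' p) * \<bar>y - p\<bar>"
    unfolding eventually_at
  proof (intro exI[of _ "min d (min (p - t0) (t1 - p))"] conjI ballI impI)
    fix y assume y: "y \<noteq> p \<and> dist y p < min d (min (p - t0) (t1 - p))"
    then have "tilt p y \<noteq> 0" using assms by (intro tilt_nonzero) (auto simp: dist_real_def)
    then show "norm (tpar p y) \<le> 4 / 3 * norm (r' p) * \<bar>y - p\<bar>"
      using d(2)[of y] y by (auto simp: tpar_eq dist_real_def abs_minus_commute divide_le_eq abs_divide)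
  qed (use d(1) assms in auto)
  show "((\<lambda>y. 4 / 3 * norm (r' p) * \<bar>y - p\<bar>) \<longlongrightarrow> 0) (at p)"
    by (auto intro!: tendsto_eq_intros)
qed

lemma tpar_small_near:
  assumes "t0 < p" "p < t1" "\<epsilon> > 0"
  obtains d where "d > 0" "\<And>y. y \<noteq> p \<Longrightarrow> \<bar>y - p\<bar> < d \<Longrightarrow> \<bar>tpar p y\<bar> < \<epsilon>"
  using tendstoD[OF tpar_tendsto_0[OF assms(1,2)] assms(3)] that
  unfolding eventually_at by (auto simp: dist_real_def)

text \<open>The ratio below is never \<open>1\<close> by injectivity of \<open>tpar s\<close>, so it stays below \<open>1\<close> on the connected
  set of admissible pairs \<open>(s, u)\<close>, once this is known for one pair near the diagonal.\<close>

lemma tpar_ratio_at_t0: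
  assumes "t0 < t" "t < t1"
  shows "0 < tpar t0 t / tpar t0 t1 \<and> tpar t0 t / tpar t0 t1 < 1"
proof -
  define R where "R = {t0..<t1} \<times> {t0..<t1} \<inter> {z. fst z < snd z}"
  define G where "G z = tpar (fst z) (snd z) / tpar (fst z) t1" for z
  have R: "z \<in> R \<longleftrightarrow> t0 \<le> fst z \<and> fst z < snd z \<and> snd z < t1" for z by (cases z) (auto simp: R_def)
  have pos: "0 < G z" if "z \<in> R" for z
    using tpar_signs(1)[of "fst z" "snd z" "fst z" t1] tpar_nonzero[of "fst z" "snd z"]
      tpar_nonzero[of "fst z" t1] that
    by (auto simp: R G_def zero_less_divide_iff)
  have not_one: "G z - 1 \<noteq> 0" if "z \<in> R" for z
  proof -
    have "inj_on (tpar (fst z)) {fst z<..t1}" by (rule tpar_inj) (use that in \<open>auto simp: R\<close>)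
    then have "tpar (fst z) (snd z) \<noteq> tpar (fst z) t1"
      using that inj_onD[of "tpar (fst z)" _ "snd z" t1] by (fastforce simp: R)
    then show ?thesis using tpar_nonzero[of "fst z" t1] that by (auto simp: G_def R)
  qed
  have cont: "continuous_on R (\<lambda>z. G z - 1)"
    unfolding G_def
    by (intro continuous_intros continuous_on_tpar) (use tpar_nonzero in \<open>auto simp: R\<close>)
  have conn: "connected R"
    unfolding R_def by (intro convex_connected convex_Times_Int_less) auto
  define p where "p = (t0 + t1) / 2"
  have p: "t0 < p" "p < t1" using t0_less_t1 by (auto simp: p_def)
  have "tpar p t1 \<noteq> 0" using tpar_nonzero[of p t1] p by auto
  then obtain d where d: "d > 0" "\<And>y. y \<noteq> p \<Longrightarrow> \<bar>y - p\<bar> < d \<Longrightarrow> \<bar>tpar p y\<bar> < \<bar>tpar p t1\<bar>"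
    using tpar_small_near[OF p] by (metis zero_less_abs_iff)
  define v where "v = p + min d (t1 - p) / 2"
  have v: "(p, v) \<in> R" "\<bar>tpar p v\<bar> < \<bar>tpar p t1\<bar>"
    using d p by (auto simp: R v_def min_def field_simps)
  then have "G (p, v) < 1"
    using pos[OF v(1)] by (auto simp: G_def abs_divide divide_less_eq split: abs_split)
  moreover have "(t0, t) \<in> R" using assms by (simp add: R)
  ultimately have "G (t0, t) < 1"
    using sign_constant_on_connected[OF conn cont _ _ v(1), of "(t0, t)"] not_one by force
  then show ?thesis using pos[of "(t0, t)"] assms by (simp add: G_def R)
qed

lemma tpar_ratio_at_t1:
  assumes "t0 < t" "t < t1"
  shows "0 < tpar t1 t / tpar t1 t0 \<and> tpar t1 t / tpar t1 t0 < 1"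
proof -
  define R where "R = {t0<..t1} \<times> {t0<..t1} \<inter> {z. fst z < snd z}"
  define G where "G z = tpar (snd z) (fst z) / tpar (snd z) t0" for z
  have R: "z \<in> R \<longleftrightarrow> t0 < fst z \<and> fst z < snd z \<and> snd z \<le> t1" for z by (cases z) (auto simp: R_def)
  have pos: "0 < G z" if "z \<in> R" for z
    using tpar_signs(2)[of "fst z" "snd z" t0 "snd z"] tpar_nonzero[of "snd z" "fst z"]
      tpar_nonzero[of "snd z" t0] that
    by (auto simp: R G_def zero_less_divide_iff)
  have not_one: "G z - 1 \<noteq> 0" if "z \<in> R" for z
  proof -
    have "inj_on (tpar (snd z)) {t0..<snd z}" by (rule tpar_inj) (use that in \<open>auto simp: R\<close>)
    then have "tpar (snd z) (fst z) \<noteq> tpar (snd z) t0"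
      using that inj_onD[of "tpar (snd z)" _ "fst z" t0] by (fastforce simp: R)
    then show ?thesis using tpar_nonzero[of "snd z" t0] that by (auto simp: G_def R)
  qed
  have cont: "continuous_on R (\<lambda>z. G z - 1)"
    unfolding G_def
    by (intro continuous_intros continuous_on_tpar) (use tpar_nonzero in \<open>auto simp: R\<close>)
  have conn: "connected R"
    unfolding R_def by (intro convex_connected convex_Times_Int_less) auto
  define p where "p = (t0 + t1) / 2"
  have p: "t0 < p" "p < t1" using t0_less_t1 by (auto simp: p_def)
  have "tpar p t0 \<noteq> 0" using tpar_nonzero[of p t0] p by auto
  then obtain d where d: "d > 0" "\<And>y. y \<noteq> p \<Longrightarrow> \<bar>y - p\<bar> < d \<Longrightarrow> \<bar>tpar p y\<bar> < \<bar>tpar p t0\<bar>"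
    using tpar_small_near[OF p] by (metis zero_less_abs_iff)
  define v where "v = p - min d (p - t0) / 2"
  have v: "(v, p) \<in> R" "\<bar>tpar p v\<bar> < \<bar>tpar p t0\<bar>"
    using d p by (auto simp: R v_def min_def field_simps)
  then have "G (v, p) < 1"
    using pos[OF v(1)] by (auto simp: G_def abs_divide divide_less_eq split: abs_split)
  moreover have "(t, t1) \<in> R" using assms by (simp add: R)
  ultimately have "G (t, t1) < 1"
    using sign_constant_on_connected[OF conn cont _ _ v(1), of "(t, t1)"] not_one by force
  then show ?thesis using pos[of "(t, t1)"] assms by (simp add: G_def R)
qed

lemma on_osc_plane_iff:
  assumes "w \<bullet> \<gamma> u \<noteq> 0"
  shows "(A + \<mu> *\<^sub>R w - r u) \<bullet> \<gamma> u = 0 \<longleftrightarrow> \<mu> = osc_param A w u"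
  using assms by (auto simp: osc_param_def inner_diff_left inner_add_left field_simps)

section \<open>The associated tetrahedron\<close>

abbreviation "V \<equiv> tet_vertex r t0 t1"

lemma tet_vertex_1: "V 1 = r t0 + tpar t0 t1 *\<^sub>R \<alpha> t0"
proof -
  have frames: "alpha_plus r t0 = \<alpha> t0" "gamma_plus r t0 = \<gamma> t0" "gamma_minus r t1 = \<gamma> t1"
    using one_sided_frames t0_less_t1 by auto
  have tilt: "\<alpha> t0 \<bullet> \<gamma> t1 \<noteq> 0" using tilt_nonzero[of t0 t1] t0_less_t1 by (simp add: tilt_def)
  have orth: "\<alpha> t0 \<bullet> \<gamma> t0 = 0" using \<alpha>_\<gamma>_orthogonal t0_less_t1 by simp
  show ?thesis
    unfolding tet_vertex_def Let_def
  proof (simp, rule the_equality)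
    show "r t0 + tpar t0 t1 *\<^sub>R \<alpha> t0 \<in> tangent_line_plus r t0 \<and>
        r t0 + tpar t0 t1 *\<^sub>R \<alpha> t0 \<in> osc_plane_plus r t0 \<and> r t0 + tpar t0 t1 *\<^sub>R \<alpha> t0 \<in> osc_plane_minus r t1"
      using on_osc_plane_iff[OF tilt, of "r t0" "tpar t0 t1"] orth
      by (auto simp: tangent_line_plus_def osc_plane_plus_def osc_plane_minus_def frames tpar_def)
    fix X assume "X \<in> tangent_line_plus r t0 \<and> X \<in> osc_plane_plus r t0 \<and> X \<in> osc_plane_minus r t1"
    then show "X = r t0 + tpar t0 t1 *\<^sub>R \<alpha> t0"
      using on_osc_plane_iff[OF tilt, of "r t0"]
      by (auto simp: tangent_line_plus_def osc_plane_minus_def frames tpar_def)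
  qed
qed

lemma tet_vertex_2: "V 2 = r t1 + tpar t1 t0 *\<^sub>R \<alpha> t1"
proof -
  have frames: "alpha_minus r t1 = \<alpha> t1" "gamma_plus r t0 = \<gamma> t0" "gamma_minus r t1 = \<gamma> t1"
    using one_sided_frames t0_less_t1 by auto
  have tilt: "\<alpha> t1 \<bullet> \<gamma> t0 \<noteq> 0" using tilt_nonzero[of t1 t0] t0_less_t1 by (simp add: tilt_def)
  have orth: "\<alpha> t1 \<bullet> \<gamma> t1 = 0" using \<alpha>_\<gamma>_orthogonal t0_less_t1 by simp
  show ?thesis
    unfolding tet_vertex_def Let_def
  proof (simp, rule the_equality)
    show "r t1 + tpar t1 t0 *\<^sub>R \<alpha> t1 \<in> tangent_line_minus r t1 \<and>
        r t1 + tpar t1 t0 *\<^sub>R \<alpha> t1 \<in> osc_plane_plus r t0 \<and> r t1 + tpar t1 t0 *\<^sub>R \<alpha> t1 \<in> osc_plane_minus r t1"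
      using on_osc_plane_iff[OF tilt, of "r t1" "tpar t1 t0"] orth
      by (auto simp: tangent_line_minus_def osc_plane_plus_def osc_plane_minus_def frames tpar_def)
    fix X assume "X \<in> tangent_line_minus r t1 \<and> X \<in> osc_plane_plus r t0 \<and> X \<in> osc_plane_minus r t1"
    then show "X = r t1 + tpar t1 t0 *\<^sub>R \<alpha> t1"
      using on_osc_plane_iff[OF tilt, of "r t1"]
      by (auto simp: tangent_line_minus_def osc_plane_plus_def frames tpar_def)
  qed
qed

lemma tet_vertex_0: "V 0 = r t0" and tet_vertex_3: "V 3 = r t1"
  by (simp_all add: tet_vertex_def)

text \<open>The point \<open>r\<^sub>i\<^sub>-\<^sub>1 + \<mu> (r\<^sub>i - r\<^sub>i\<^sub>-\<^sub>1)\<close> of the edge line lies on \<open>O(t)\<close> for \<open>\<mu> = edge_param i t\<close>,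
  so \<open>k\<^sub>i = |1 - edge_param i|\<close>.\<close>

definition "edge_param i = osc_param (V (i - 1)) (V i - V (i - 1))"

lemma tet_ratio_eq_edge_param:
  assumes "t0 < t" "t < t1" "(V i - V (i - 1)) \<bullet> \<gamma> t \<noteq> 0"
  shows "tet_ratio r t0 t1 i t = \<bar>1 - edge_param i t\<bar>"
proof -
  have "V i \<noteq> V (i - 1)" using assms(3) by auto
  then show ?thesis
    unfolding tet_ratio_def Let_def osc_plane_eq[OF assms(1) less_imp_le[OF assms(2)]]
      line_through_Int_plane[OF assms(3)]
    by (simp add: dist_ratio_on_line edge_param_def osc_param_def)
qed

lemma edge_param_simps:
  "edge_param 1 = osc_param (V 0) (V 1 - V 0)" "edge_param 2 = osc_param (V 1) (V 2 - V 1)"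
  "edge_param 3 = osc_param (V 2) (V 3 - V 2)"
  by (simp_all add: edge_param_def numeral_2_eq_2 numeral_3_eq_3)

lemma first_edge_param:
  assumes "t0 < t" "t < t1"
  shows "(V 1 - V 0) \<bullet> \<gamma> t \<noteq> 0" "edge_param 1 t = tpar t0 t / tpar t0 t1"
proof -
  have nz: "tpar t0 t1 \<noteq> 0" "tilt t0 t \<noteq> 0"
    using tpar_nonzero[of t0 t1] tilt_nonzero[of t0 t] assms by auto
  have edge: "V 1 - V 0 = tpar t0 t1 *\<^sub>R \<alpha> t0" unfolding tet_vertex_0 tet_vertex_1 by simp
  show "(V 1 - V 0) \<bullet> \<gamma> t \<noteq> 0" using nz unfolding edge by (simp add: tilt_def)
  show "edge_param 1 t = tpar t0 t / tpar t0 t1"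
    using nz unfolding edge_param_simps edge unfolding tet_vertex_0 by (simp add: osc_param_def tpar_def tilt_def)
qed

lemma last_edge_param:
  assumes "t0 < t" "t < t1"
  shows "(V 3 - V 2) \<bullet> \<gamma> t \<noteq> 0" "edge_param 3 t = 1 - tpar t1 t / tpar t1 t0"
proof -
  have nz: "tpar t1 t0 \<noteq> 0" "tilt t1 t \<noteq> 0"
    using tpar_nonzero[of t1 t0] tilt_nonzero[of t1 t] assms by auto
  have edge: "V 3 - V 2 = - tpar t1 t0 *\<^sub>R \<alpha> t1" unfolding tet_vertex_2 tet_vertex_3 by simp
  show "(V 3 - V 2) \<bullet> \<gamma> t \<noteq> 0" using nz unfolding edge by (simp add: tilt_def)
  show "edge_param 3 t = 1 - tpar t1 t / tpar t1 t0"
    using nz unfolding edge_param_simps edge unfolding tet_vertex_2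
    by (simp add: osc_param_def tpar_def tilt_def inner_diff_left inner_add_left field_simps)
qed

text \<open>\<open>r\<^sub>1\<close> and \<open>r\<^sub>2\<close> lie strictly on opposite sides of every \<open>O(t)\<close>.\<close>

lemma vertex_sides:
  assumes "t0 < t" "t < t1"
  shows "(V 1 - r t) \<bullet> \<gamma> t * height t0 t1 < 0" "(V 2 - r t) \<bullet> \<gamma> t * height t1 t0 < 0"
proof -
  have seg: "t0 \<in> {t0..t1}" "t1 \<in> {t0..t1}" "t \<in> {t0..t1}" using assms by auto
  have nz: "height t0 t1 \<noteq> 0" "height t1 t0 \<noteq> 0" "tilt t0 t1 \<noteq> 0" "tilt t1 t0 \<noteq> 0"
    "tilt t0 t \<noteq> 0" "tilt t1 t \<noteq> 0"
    using height_nonzero tilt_nonzero seg assms t0_less_t1 by auto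
  have "tilt t0 t > 0 \<longleftrightarrow> tilt t0 t1 > 0" "tilt t1 t > 0 \<longleftrightarrow> tilt t1 t0 > 0"
    using height_tilt_signs(2)[of t0 t t0 t1] height_tilt_signs(2)[of t0 t1 t0 t1]
      height_tilt_signs(2)[of t0 t1 t t1] assms by auto
  then have pos: "0 < tilt t0 t / tilt t0 t1" "0 < tilt t1 t / tilt t1 t0"
    using nz by (auto simp: zero_less_divide_iff)
  have q: "0 < 1 - tpar t0 t / tpar t0 t1" "0 < 1 - tpar t1 t / tpar t1 t0"
    using tpar_ratio_at_t0[OF assms] tpar_ratio_at_t1[OF assms] by auto
  have "(V 1 - r t) \<bullet> \<gamma> t * height t0 t1
      = - (tilt t0 t / tilt t0 t1) * (height t0 t1) ^ 2 * (1 - tpar t0 t / tpar t0 t1)"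
    using nz unfolding tet_vertex_1 by (simp add: tpar_eq height_def tilt_def inner_diff_left inner_add_left
        field_simps power2_eq_square)
  moreover have "0 < (tilt t0 t / tilt t0 t1) * (height t0 t1) ^ 2 * (1 - tpar t0 t / tpar t0 t1)"
    using pos(1) q(1) nz(1) by (intro mult_pos_pos) auto
  ultimately show "(V 1 - r t) \<bullet> \<gamma> t * height t0 t1 < 0" by linarith
  have "(V 2 - r t) \<bullet> \<gamma> t * height t1 t0
      = - (tilt t1 t / tilt t1 t0) * (height t1 t0) ^ 2 * (1 - tpar t1 t / tpar t1 t0)"
    using nz unfolding tet_vertex_2 by (simp add: tpar_eq height_def tilt_def inner_diff_left inner_add_left
        field_simps power2_eq_square)
  moreover have "0 < (tilt t1 t / tilt t1 t0) * (height t1 t0) ^ 2 * (1 - tpar t1 t / tpar t1 t0)"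
    using pos(2) q(2) nz(2) by (intro mult_pos_pos) auto
  ultimately show "(V 2 - r t) \<bullet> \<gamma> t * height t1 t0 < 0" by linarith
qed

lemma middle_edge_param:
  assumes "t0 < t" "t < t1"
  shows "(V 2 - V 1) \<bullet> \<gamma> t \<noteq> 0" "0 < edge_param 2 t" "edge_param 2 t < 1"
proof -
  define a where "a = (V 1 - r t) \<bullet> \<gamma> t"
  define b where "b = (V 2 - r t) \<bullet> \<gamma> t"
  have "height t0 t1 > 0 \<longleftrightarrow> height t1 t0 < 0" "height t0 t1 \<noteq> 0"
    using height_tilt_signs(1)[of t0 t1 t0 t1] height_nonzero[of t0 t1] t0_less_t1 by auto
  then have "a * b < 0"
    using vertex_sides[OF assms] unfolding a_def b_def
    by (auto simp: mult_less_0_iff zero_less_mult_iff)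
  moreover have "(V 2 - V 1) \<bullet> \<gamma> t = b - a" "edge_param 2 t = - a / (b - a)"
    unfolding edge_param_simps by (simp_all add: a_def b_def osc_param_def inner_diff_left)
  ultimately show "(V 2 - V 1) \<bullet> \<gamma> t \<noteq> 0" "0 < edge_param 2 t" "edge_param 2 t < 1"
    using opposite_signs_ratio_bounds[of a b] by auto
qed

lemma inner_vertices_on_planes:
  shows "(V 1 - r t0) \<bullet> \<gamma> t0 = 0" "(V 1 - r t1) \<bullet> \<gamma> t1 = 0"
    and "(V 2 - r t0) \<bullet> \<gamma> t0 = 0" "(V 2 - r t1) \<bullet> \<gamma> t1 = 0"
proof -
  have tilts: "\<alpha> t0 \<bullet> \<gamma> t1 \<noteq> 0" "\<alpha> t1 \<bullet> \<gamma> t0 \<noteq> 0"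
    using tilt_nonzero[of t0 t1] tilt_nonzero[of t1 t0] t0_less_t1 by (auto simp: tilt_def)
  show "(V 1 - r t0) \<bullet> \<gamma> t0 = 0" "(V 2 - r t1) \<bullet> \<gamma> t1 = 0"
    unfolding tet_vertex_1 tet_vertex_2 using \<alpha>_\<gamma>_orthogonal t0_less_t1 by simp_all
  show "(V 1 - r t1) \<bullet> \<gamma> t1 = 0" "(V 2 - r t0) \<bullet> \<gamma> t0 = 0"
    unfolding tet_vertex_1 tet_vertex_2 tpar_def using on_osc_plane_iff tilts by simp_all
qed

lemma first_edge_triple_nonzero:
  assumes "t0 < u" "u < t1"
  shows "cross3 (r u - V 0) (V 1 - V 0) \<bullet> r' u \<noteq> 0"
proof -
  have "tpar t0 t1 \<noteq> 0" "r' u \<noteq> 0" "cross3 (r u - r t0) (\<alpha> t0) \<bullet> \<alpha> u \<noteq> 0"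
    using tpar_nonzero[of t0 t1] nondegenerate(3)[of u] tangent_triple_nonzero[of t0 u] assms by auto
  moreover have "cross3 (r u - V 0) (V 1 - V 0) \<bullet> r' u
      = tpar t0 t1 * norm (r' u) * (cross3 (r u - r t0) (\<alpha> t0) \<bullet> \<alpha> u)"
    unfolding tet_vertex_0 tet_vertex_1 inner_r'_eq[OF assms(1) less_imp_le[OF assms(2)]]
    by (simp add: cross_mult_right)
  ultimately show ?thesis by simp
qed

lemma last_edge_triple_nonzero:
  assumes "t0 < u" "u < t1"
  shows "cross3 (r u - V 2) (V 3 - V 2) \<bullet> r' u \<noteq> 0"
proof -
  have "tpar t1 t0 \<noteq> 0" "r' u \<noteq> 0" "cross3 (r u - r t1) (\<alpha> t1) \<bullet> \<alpha> u \<noteq> 0"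
    using tpar_nonzero[of t1 t0] nondegenerate(3)[of u] tangent_triple_nonzero[of t1 u] assms by auto
  moreover have "cross3 (r u - V 2) (V 3 - V 2) = - tpar t1 t0 *\<^sub>R cross3 (r u - r t1) (\<alpha> t1)"
    unfolding tet_vertex_2 tet_vertex_3
    by (simp add: Cross3.left_diff_distrib Cross3.right_diff_distrib cross_mult_left cross_mult_right
        cross_add_left)
  then have "cross3 (r u - V 2) (V 3 - V 2) \<bullet> r' u
      = - tpar t1 t0 * norm (r' u) * (cross3 (r u - r t1) (\<alpha> t1) \<bullet> \<alpha> u)"
    unfolding inner_r'_eq[OF assms(1) less_imp_le[OF assms(2)]] by simp
  ultimately show ?thesis by simp
qed

text \<open>The edge \<open>r\<^sub>1r\<^sub>2\<close> is the line \<open>O(t\<^sub>0) \<inter> O(t\<^sub>1)\<close>; if it were coplanar with \<open>r x\<close> and the tangent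
  at \<open>x\<close>, Binet--Cauchy would give \<open>tilt x t\<^sub>0 height x t\<^sub>1 = tilt x t\<^sub>1 height x t\<^sub>0\<close>, contradicting
  the signs of \<open>height\<close> and \<open>tilt\<close>.\<close>

lemma middle_edge_triple_nonzero:
  assumes "t0 < x" "x < t1"
  shows "cross3 (r x - V 1) (V 2 - V 1) \<bullet> r' x \<noteq> 0"
proof
  assume zero: "cross3 (r x - V 1) (V 2 - V 1) \<bullet> r' x = 0"
  define d where "d = V 2 - V 1"
  have "d \<noteq> 0" using middle_edge_param(1)[OF assms] by (auto simp: d_def)
  moreover have "d \<bullet> \<gamma> t0 = 0" "d \<bullet> \<gamma> t1 = 0"
    using inner_vertices_on_planes unfolding d_def by (simp_all add: inner_diff_left)
  moreover have "d \<bullet> cross3 (\<alpha> x) (r x - V 1) = 0"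
  proof -
    have "cross3 (r x - V 1) d \<bullet> \<alpha> x = 0"
      using zero nondegenerate(3)[of x] assms
      unfolding d_def inner_r'_eq[OF assms(1) less_imp_le[OF assms(2)]] by simp
    then show ?thesis using cross_triple[of "\<alpha> x" "r x - V 1" d] by (simp add: inner_commute)
  qed
  ultimately have "cross3 (\<alpha> x) (r x - V 1) \<bullet> cross3 (\<gamma> t0) (\<gamma> t1) = 0"
    using triple_product_of_orthogonal_to_nonzero by blast
  moreover have "(r x - V 1) \<bullet> \<gamma> t1 = height x t1" "(r x - V 1) \<bullet> \<gamma> t0 = height x t0"
    using inner_vertices_on_planes(1,2) by (simp_all add: height_def inner_diff_left)
  ultimately have eq: "tilt x t0 * height x t1 = tilt x t1 * height x t0"
    by (simp add: dot_cross tilt_def)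
  have "height x t1 > 0 \<longleftrightarrow> height x t0 < 0" "tilt x t1 > 0 \<longleftrightarrow> tilt x t0 > 0"
    using height_tilt_signs[of x t1 t0 x] assms by auto
  moreover have "height x t1 \<noteq> 0" "height x t0 \<noteq> 0" "tilt x t1 \<noteq> 0" "tilt x t0 \<noteq> 0"
    using height_nonzero tilt_nonzero assms by auto
  ultimately have "(tilt x t0 * height x t1) * (tilt x t1 * height x t0) < 0"
    by (cases "tilt x t0 > 0"; cases "height x t1 > 0") (auto simp: mult_less_0_iff zero_less_mult_iff)
  then show False using eq by (metis not_square_less_zero)
qed

lemma edge_param_strict_mono:
  assumes "i \<in> {1, 2, 3}"
  shows "strict_mono_on {t0<..<t1} (edge_param i) \<or> strict_antimono_on {t0<..<t1} (edge_param i)"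
proof -
  obtain A w where edge: "edge_param i = osc_param A w"
    and parallel: "\<And>u. u \<in> {t0<..<t1} \<Longrightarrow> w \<bullet> \<gamma> u \<noteq> 0"
    and triple: "\<And>u. u \<in> {t0<..<t1} \<Longrightarrow> t0 < u \<Longrightarrow> u < t1 \<Longrightarrow> cross3 (r u - A) w \<bullet> r' u \<noteq> 0"
    using assms edge_param_simps first_edge_param(1) middle_edge_param(1) last_edge_param(1) first_edge_triple_nonzero
      middle_edge_triple_nonzero last_edge_triple_nonzero
    by (metis greaterThanLessThan_iff insert_iff singletonD)
  have "inj_on (edge_param i) {t0<..<t1}"
    unfolding edge by (rule osc_param_inj[OF _ _ parallel triple]) auto
  moreover have "continuous_on {t0<..<t1} (edge_param i)"
    unfolding edge by (rule continuous_on_osc_param[OF _ parallel]) auto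
  ultimately show ?thesis using injective_eq_monotone_map[of "{t0<..<t1}"] by simp
qed

lemma edge_param_in_unit_interval:
  assumes "i \<in> {1, 2, 3}" "t0 < t" "t < t1"
  shows "0 < edge_param i t \<and> edge_param i t < 1"
  using assms first_edge_param(2) middle_edge_param(2,3) last_edge_param(2) tpar_ratio_at_t0 tpar_ratio_at_t1 by auto

lemma tet_ratio_eq_one_minus_edge_param:
  assumes "i \<in> {1, 2, 3}" "t0 < t" "t < t1"
  shows "tet_ratio r t0 t1 i t = 1 - edge_param i t"
proof -
  have "(V i - V (i - 1)) \<bullet> \<gamma> t \<noteq> 0"
    using assms first_edge_param(1) middle_edge_param(1) last_edge_param(1) by auto
  then have "tet_ratio r t0 t1 i t = \<bar>1 - edge_param i t\<bar>"
    using tet_ratio_eq_edge_param assms(2,3) by blast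
  then show ?thesis using edge_param_in_unit_interval[OF assms] by simp
qed

end

theorem corollary1:
  fixes P Q :: "real poly ^ 3" and I :: "real set" and t0 t1 :: real
  assumes "rational_space_curve P Q I"
    and "admissible_segment P Q I t0 t1"
  shows "\<forall>i\<in>{1, 2, 3 :: nat}.
           (mono_on {t0<..<t1} (tet_ratio (rcurve P Q) t0 t1 i) \<or>
            antimono_on {t0<..<t1} (tet_ratio (rcurve P Q) t0 t1 i)) \<and>
           (\<forall>t\<in>{t0<..<t1}. 0 < tet_ratio (rcurve P Q) t0 t1 i t \<and>
                             tet_ratio (rcurve P Q) t0 t1 i t < 1)"
proof (intro ballI conjI)
  interpret admissible_arc P Q I t0 t1 using assms by unfold_locales
  fix i :: nat assume i: "i \<in> {1, 2, 3}"
  have k: "tet_ratio r t0 t1 i t = 1 - edge_param i t" if "t \<in> {t0<..<t1}" for t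
    using tet_ratio_eq_one_minus_edge_param[OF i] that by simp
  show "mono_on {t0<..<t1} (tet_ratio r t0 t1 i) \<or> antimono_on {t0<..<t1} (tet_ratio r t0 t1 i)"
    by (rule mono_or_antimono_one_minus[OF edge_param_strict_mono[OF i] k])
  fix t assume "t \<in> {t0<..<t1}"
  then show "0 < tet_ratio r t0 t1 i t" "tet_ratio r t0 t1 i t < 1"
    using k edge_param_in_unit_interval[OF i] by auto
qed

end
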